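(* Let $t\mapsto f_t$ be a $C^1$ family of piecewise expanding $C^1$ unimodal maps such that $f_0$ is good and $J(f_0,\partial_tf_t|_{t=0})\neq0$. (A) If the critical point of $f_0$ is periodic, then there exists a sequence of parameters $t_n\to0$ such that the critical point of $f_{t_n}$ is not periodic. (B) If the critical point of $f_0$ is not periodic, then there exists a sequence of parameters $t_n\to0$ such that the critical point of $f_{t_n}$ is periodic.
   Context: Let $I=[-1,1]$ and $c=0$ (the critical point). $\mathcal B^1(I)$ is the Banach space of continuous $f:I\to\mathbb R$ that are $C^1$ on $[-1,0]$ and on $[0,1]$ with $f(1)=f(-1)$, normed by $|f|_1=\max\{|f|_{C^1[-1,0]},|f|_{C^1[0,1]}\}$. A piecewise expanding $C^1$ unimodal map is an $f\in\mathcal B^1(I)$ with $f(-1)=f(1)=-1$, $\inf_{x\in[-1,0]}Df(x)>1$, $\sup_{x\in[0,1]}Df(x)<-1$ and $f(0)\le1$; the set of these is $\mathcal U^1$. A $C^1$ family of such maps is a $C^1$ map $t\mapsto f_t$ from an interval around $0$ into $\mathcal U^1\subset\mathcal B^1(I)$. $f$ is good if either $c$ is not periodic, or $c$ has prime period $p\ge2$ and $|Df^{p-1}(f(c))|\min\{|Df^+(c)|,|Df^-(c)|\}>2$ ($Df^\pm(c)$ one-sided derivatives at $c$). For bounded $v:I\to\mathbb R$: if $c$ is not periodic for $f$, $J(f,v)=\sum_{i=0}^\infty \frac{v(f^i(c))}{Df^i(f(c))}$; if $c$ has prime period $p$, $J(f,v)=\sum_{i=0}^{p-1}\frac{v(f^i(c))}{Df^i(f(c))}$.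 *)

theory Defs
  imports Complex_Main
begin

text \<open>I = [-1,1], critical point c = 0. Functions are real \<Rightarrow> real; only values on I matter.\<close>

definition C1_on :: "real \<Rightarrow> real \<Rightarrow> (real \<Rightarrow> real) \<Rightarrow> (real \<Rightarrow> real) \<Rightarrow> bool" where
  "C1_on a b g g' \<longleftrightarrow> continuous_on {a..b} g' \<and>
     (\<forall>x\<in>{a..b}. (g has_real_derivative g' x) (at x within {a..b}))"

definition DL :: "(real \<Rightarrow> real) \<Rightarrow> real \<Rightarrow> real" where
  "DL g x = (SOME d. (g has_real_derivative d) (at x within {-1..0}))"

definition DR :: "(real \<Rightarrow> real) \<Rightarrow> real \<Rightarrow> real" where
  "DR g x = (SOME d. (g has_real_derivative d) (at x within {0..1}))"

definition B1 :: "(real \<Rightarrow> real) \<Rightarrow> bool" where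
  "B1 g \<longleftrightarrow> continuous_on {-1..1} g \<and> (\<exists>g'. C1_on (-1) 0 g g') \<and> (\<exists>g'. C1_on 0 1 g g')
     \<and> g 1 = g (-1)"

definition normB1 :: "(real \<Rightarrow> real) \<Rightarrow> real" where
  "normB1 g = max (max (SUP x\<in>{-1..0}. \<bar>g x\<bar>) (SUP x\<in>{-1..0}. \<bar>DL g x\<bar>))
                  (max (SUP x\<in>{0..1}. \<bar>g x\<bar>) (SUP x\<in>{0..1}. \<bar>DR g x\<bar>))"

definition U1 :: "(real \<Rightarrow> real) \<Rightarrow> bool" where
  "U1 f \<longleftrightarrow> B1 f \<and> f (-1) = -1 \<and> f 1 = -1 \<and>
     (INF x\<in>{-1..0}. DL f x) > 1 \<and> (SUP x\<in>{0..1}. DR f x) < -1 \<and> f 0 \<le> 1"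

definition C1_family :: "real \<Rightarrow> (real \<Rightarrow> real \<Rightarrow> real) \<Rightarrow> (real \<Rightarrow> real \<Rightarrow> real) \<Rightarrow> bool" where
  "C1_family e f v \<longleftrightarrow> e > 0 \<and>
     (\<forall>t\<in>{-e<..<e}. U1 (f t) \<and> B1 (v t) \<and>
        ((\<lambda>h. normB1 (\<lambda>x. (f (t + h) x - f t x) / h - v t x)) \<longlongrightarrow> 0) (at 0) \<and>
        ((\<lambda>s. normB1 (\<lambda>x. v s x - v t x)) \<longlongrightarrow> 0) (at t within {-e<..<e}))"

definition Df :: "(real \<Rightarrow> real) \<Rightarrow> real \<Rightarrow> real" where
  "Df f x = (if x \<le> 0 then DL f x else DR f x)"

definition Dfn :: "(real \<Rightarrow> real) \<Rightarrow> nat \<Rightarrow> real \<Rightarrow> real" where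
  "Dfn f n y = (\<Prod>j<n. Df f ((f ^^ j) y))"

definition crit_periodic :: "(real \<Rightarrow> real) \<Rightarrow> bool" where
  "crit_periodic f \<longleftrightarrow> (\<exists>n>0. (f ^^ n) 0 = 0)"

definition prime_period :: "(real \<Rightarrow> real) \<Rightarrow> nat" where
  "prime_period f = (LEAST n. n > 0 \<and> (f ^^ n) 0 = 0)"

definition good :: "(real \<Rightarrow> real) \<Rightarrow> bool" where
  "good f \<longleftrightarrow> \<not> crit_periodic f \<or>
     (prime_period f \<ge> 2 \<and>
      \<bar>Dfn f (prime_period f - 1) (f 0)\<bar> * min \<bar>DR f 0\<bar> \<bar>DL f 0\<bar> > 2)"

definition J :: "(real \<Rightarrow> real) \<Rightarrow> (real \<Rightarrow> real) \<Rightarrow> real" where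
  "J f v = (if crit_periodic f
            then (\<Sum>i<prime_period f. v ((f ^^ i) 0) / Dfn f i (f 0))
            else (\<Sum>i. v ((f ^^ i) 0) / Dfn f i (f 0)))"

end

theory Submission
  imports Defs "HOL-Analysis.Analysis"
begin

text \<open>Write \<open>x\<^sub>n(t) = f\<^sub>t\<^sup>n(0)\<close> for the critical orbit. As long as the orbit avoids the critical
  point, \<open>x\<^sub>n\<close> is differentiable in \<open>t\<close> and its derivative obeys the variational recursion
  \<open>x'\<^sub>n\<^sub>+\<^sub>1 = Df\<^sub>t(x\<^sub>n) x'\<^sub>n + v\<^sub>t(x\<^sub>n)\<close>, which unrolls at \<open>t = 0\<close> to
  \<open>x'\<^sub>n\<^sub>+\<^sub>1(0) = Df\<^sup>n(f\<^sub>0(0)) \<Sum>\<^sub>j\<^sub>\<le>\<^sub>n v\<^sub>0(x\<^sub>j) / Df\<^sup>j(f\<^sub>0(0))\<close>, a partial sum of \<open>J(f\<^sub>0, v\<^sub>0)\<close>.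

  (B) If the critical point of \<open>f\<^sub>0\<close> is not periodic and no \<open>f\<^sub>t\<close> with \<open>|t| \<le> r\<close> had a
  periodic critical point, all \<open>x\<^sub>n\<close> would be differentiable on \<open>[-r, r]\<close>. Since \<open>J \<noteq> 0\<close>, some
  \<open>|x'\<^sub>N|\<close> is large near \<open>0\<close>, and from then on uniform expansion makes \<open>|x'\<^sub>n|\<close> grow
  geometrically, uniformly in \<open>t\<close>; the mean value theorem then contradicts \<open>x\<^sub>n(t) \<in> [-1, 1]\<close>.

  (A) If the critical point of \<open>f\<^sub>0\<close> has prime period \<open>p\<close>, then \<open>J \<noteq> 0\<close> says \<open>x'\<^sub>p(0) \<noteq> 0\<close>, and
  goodness makes the \<open>p\<close>-block of \<open>f\<^sub>t\<close> near the critical point expand by some \<open>Lam > 2\<close>. For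
  small \<open>t \<noteq> 0\<close> with \<open>f\<^sub>t\<close> critically periodic of period \<open>q\<close>, the block returns \<open>x\<^sub>m\<^sub>p(t)\<close> move
  away from \<open>0\<close> while the tangent \<open>x'\<^sub>m\<^sub>p(t)\<close> grows; hence \<open>x'\<^sub>q(t) \<noteq> 0\<close>. So each set
  \<open>{t : prime period q}\<close> consists of isolated zeros of \<open>x\<^sub>q\<close>, the periodic parameters near \<open>0\<close>
  form a countable set, and they cannot fill an interval.\<close>

lemma continuous_on_Icc_bdd:
  assumes "continuous_on {a..b} (g::real \<Rightarrow> real)"
  shows "bdd_below (g ` {a..b})" "bdd_above (g ` {a..b})"
proof -
  have "bounded (g ` {a..b})"
    by (intro compact_imp_bounded compact_continuous_image assms compact_Icc)
  then show "bdd_below (g ` {a..b})" "bdd_above (g ` {a..b})"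
    by (rule bounded_imp_bdd_below, rule bounded_imp_bdd_above)
qed

lemma exists_eps_perturbed_product_gt:
  fixes a :: "nat \<Rightarrow> real"
  assumes "L < m * (\<Prod>i<n. a i)"
  obtains \<epsilon> where "0 < \<epsilon>" "\<epsilon> < 1" "L < (m - \<epsilon>) * (\<Prod>i<n. a i - \<epsilon>)"
proof -
  define Pr where "Pr \<epsilon> = (m - \<epsilon>) * (\<Prod>i<n. a i - \<epsilon>)" for \<epsilon>
  have "(Pr \<longlongrightarrow> Pr 0) (at_right 0)"
    unfolding Pr_def by (intro tendsto_intros)
  then have "eventually (\<lambda>\<epsilon>. Pr \<epsilon> > L) (at_right 0)"
    using assms unfolding Pr_def by (intro order_tendstoD(1)) auto
  then obtain b where "b > 0" and b: "\<And>\<epsilon>. \<epsilon> > 0 \<Longrightarrow> \<epsilon> < b \<Longrightarrow> Pr \<epsilon> > L"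
    unfolding eventually_at_right_field by auto
  show ?thesis
    using b[of "min b 1 / 2"] \<open>b > 0\<close> unfolding Pr_def by (intro that[of "min b 1 / 2"]) auto
qed

lemma continuous_on_abs_diff_le:
  fixes g :: "real \<Rightarrow> real"
  assumes "continuous_on S g" "x0 \<in> S" "\<epsilon> > 0"
  obtains \<rho> where "\<rho> > 0" "\<And>x. x \<in> S \<Longrightarrow> \<bar>x - x0\<bar> < \<rho> \<Longrightarrow> \<bar>g x - g x0\<bar> \<le> \<epsilon>"
  using assms unfolding continuous_on_iff dist_real_def by (meson less_imp_le)

lemma has_real_derivative_isolated_zero:
  assumes "(g has_real_derivative D) (at t0)" "D \<noteq> 0" "g t0 = 0"
  shows "eventually (\<lambda>t. g t \<noteq> 0) (at t0)"
proof -
  have "((\<lambda>t. (g t - g t0) / (t - t0)) \<longlongrightarrow> D) (at t0)"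
    using assms(1) unfolding has_field_derivative_iff .
  then have "eventually (\<lambda>t. (g t - g t0) / (t - t0) \<noteq> 0) (at t0)"
    using assms(2) by (rule tendsto_imp_eventually_ne)
  then show ?thesis by eventually_elim (use assms(3) in auto)
qed

lemma tendsto_uniform_compose:
  fixes G :: "real \<Rightarrow> real \<Rightarrow> real"
  assumes close: "\<And>\<epsilon>. \<epsilon> > 0 \<Longrightarrow> \<exists>\<delta>>0. \<forall>t x. \<bar>t\<bar> < \<delta> \<longrightarrow> x \<in> S \<longrightarrow> \<bar>G t x - G 0 x\<bar> \<le> \<epsilon>"
    and cont: "continuous (at y0 within S) (G 0)"
    and T: "(T \<longlongrightarrow> 0) F" and Y: "(Y \<longlongrightarrow> y0) F" and YS: "eventually (\<lambda>a. Y a \<in> S) F"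
  shows "((\<lambda>a. G (T a) (Y a)) \<longlongrightarrow> G 0 y0) F"
proof -
  have "((\<lambda>a. G (T a) (Y a) - G 0 (Y a)) \<longlongrightarrow> 0) F"
    unfolding tendsto_iff dist_real_def
  proof (intro allI impI)
    fix \<epsilon> :: real assume "\<epsilon> > 0"
    then obtain \<delta> where "\<delta> > 0" and \<delta>: "\<And>t x. \<bar>t\<bar> < \<delta> \<Longrightarrow> x \<in> S \<Longrightarrow> \<bar>G t x - G 0 x\<bar> \<le> \<epsilon>/2"
      using close[of "\<epsilon>/2"] by auto
    then have "eventually (\<lambda>a. \<bar>T a\<bar> < \<delta>) F"
      using T by (auto dest: tendstoD simp: dist_real_def)
    then show "eventually (\<lambda>a. \<bar>G (T a) (Y a) - G 0 (Y a) - 0\<bar> < \<epsilon>) F"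
      using YS by eventually_elim (use \<delta> \<open>\<epsilon> > 0\<close> in fastforce)
  qed
  from tendsto_add[OF this continuous_within_tendsto_compose[OF cont YS Y]] show ?thesis
    by simp
qed

lemma tendsto_0_eventually_abs_less:
  fixes T :: "'a \<Rightarrow> real"
  shows "(T \<longlongrightarrow> 0) F \<Longrightarrow> \<delta> > 0 \<Longrightarrow> eventually (\<lambda>a. \<bar>T a\<bar> < \<delta>) F"
  by (drule tendstoD) (auto simp: dist_real_def)

lemma exists_small_derivative:
  fixes x x' :: "real \<Rightarrow> real"
  assumes r: "r > 0" and x: "x (-r) \<in> {-1..1}" "x r \<in> {-1..1}"
    and der: "\<And>t. -r \<le> t \<Longrightarrow> t \<le> r \<Longrightarrow> (x has_real_derivative x' t) (at t)"
  shows "\<exists>z. -r < z \<and> z < r \<and> \<bar>x' z\<bar> \<le> 1 / r"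
proof -
  obtain z where z: "-r < z" "z < r" "x r - x (-r) = (r - (-r)) * x' z"
    using MVT2[of "-r" r x x'] der r by auto
  have "2 * r * \<bar>x' z\<bar> = \<bar>x r - x (-r)\<bar>" using z(3) r by (simp add: abs_mult)
  also have "\<dots> \<le> 2" using x by auto
  finally have "\<bar>x' z\<bar> \<le> 1 / r" using r by (simp add: field_simps)
  then show ?thesis using z(1,2) by blast
qed

lemma eventually_at_origin_within_strip:
  assumes "eventually (\<lambda>a. P (fst a) (snd a)) (at ((0::real), (0::real)) within UNIV \<times> S)"
  obtains d where "d > 0" "\<And>t y. t \<noteq> 0 \<Longrightarrow> \<bar>t\<bar> < d \<Longrightarrow> \<bar>y\<bar> < d \<Longrightarrow> y \<in> S \<Longrightarrow> P t y"
proof -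
  obtain d where "d > 0" and d: "\<And>t y. (t, y) \<in> UNIV \<times> S \<Longrightarrow> (t, y) \<noteq> (0, 0) \<Longrightarrow>
      dist (t, y) (0, 0) < d \<Longrightarrow> P t y"
    using assms unfolding eventually_at by auto
  show ?thesis
  proof (rule that[of "d / 2"])
    fix t y :: real assume "t \<noteq> 0" "\<bar>t\<bar> < d / 2" "\<bar>y\<bar> < d / 2" "y \<in> S"
    moreover have "dist (t, y) (0, 0) \<le> \<bar>t\<bar> + \<bar>y\<bar>"
      using norm_Pair_le[of t y] by (simp add: dist_norm)
    ultimately show "P t y" using d by auto
  qed (use \<open>d > 0\<close> in auto)
qed

lemma countable_if_no_self_limpt:
  fixes Z :: "'a::euclidean_space set"
  assumes "\<And>z. z \<in> Z \<Longrightarrow> \<not> z islimpt Z"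
  shows "countable Z"
proof -
  define D where "D = - {x. x islimpt Z}"
  have "open D" unfolding D_def by (rule open_Compl[OF closed_limpts])
  moreover have "Z sparse_in D" using sparse_in_open[OF \<open>open D\<close>, of Z] unfolding D_def by simp
  moreover have "D \<inter> Z = Z" using assms unfolding D_def by auto
  ultimately show ?thesis using sparse_imp_countable by metis
qed

section \<open>One-sided C^1 functions and the space B^1\<close>

lemma at_within_Icc_neq_bot: "(a::real) < b \<Longrightarrow> x \<in> {a..b} \<Longrightarrow> at x within {a..b} \<noteq> bot"
  by (simp add: trivial_limit_within)

lemma DL_eq_of_C1_on:
  assumes "C1_on (-1) 0 g g'" "x \<in> {-1..0}"
  shows "DL g x = g' x"
proof -
  have d: "(g has_real_derivative g' x) (at x within {-1..0})"
    using assms unfolding C1_on_def by auto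
  then have "(g has_real_derivative DL g x) (at x within {-1..0})"
    unfolding DL_def by (rule someI)
  then show ?thesis
    using d has_field_derivative_unique at_within_Icc_neq_bot[of "-1" 0 x] assms(2) by auto
qed

lemma DR_eq_of_C1_on:
  assumes "C1_on 0 1 g g'" "x \<in> {0..1}"
  shows "DR g x = g' x"
proof -
  have d: "(g has_real_derivative g' x) (at x within {0..1})"
    using assms unfolding C1_on_def by auto
  then have "(g has_real_derivative DR g x) (at x within {0..1})"
    unfolding DR_def by (rule someI)
  then show ?thesis
    using d has_field_derivative_unique at_within_Icc_neq_bot[of 0 1 x] assms(2) by auto
qed

lemma C1_on_cong_deriv:
  assumes "C1_on a b g g'" "\<And>x. x \<in> {a..b} \<Longrightarrow> g'' x = g' x"
  shows "C1_on a b g g''"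
  using assms unfolding C1_on_def by (metis (no_types, lifting) continuous_on_cong)

lemma B1_C1_on_DL: "B1 g \<Longrightarrow> C1_on (-1) 0 g (DL g)"
  unfolding B1_def using C1_on_cong_deriv DL_eq_of_C1_on by blast

lemma B1_C1_on_DR: "B1 g \<Longrightarrow> C1_on 0 1 g (DR g)"
  unfolding B1_def using C1_on_cong_deriv DR_eq_of_C1_on by blast

lemma C1_on_lin:
  assumes "C1_on a b g g'" "C1_on a b h h'"
  shows "C1_on a b (\<lambda>x. c * g x + d * h x) (\<lambda>x. c * g' x + d * h' x)"
  using assms unfolding C1_on_def by (auto intro!: continuous_intros derivative_eq_intros)

lemma C1_on_diff_quotient:
  assumes "C1_on a b g1 g1'" "C1_on a b g0 g0'" "C1_on a b w w'"
  shows "C1_on a b (\<lambda>x. (g1 x - g0 x) / h - w x) (\<lambda>x. (g1' x - g0' x) / h - w' x)"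
proof -
  have "continuous_on {a..b} (\<lambda>x. inverse h * (g1' x - g0' x) - w' x)"
    using assms unfolding C1_on_def by (intro continuous_on_diff continuous_on_mult_left) auto
  then have "continuous_on {a..b} (\<lambda>x. (g1' x - g0' x) / h - w' x)"
    by (simp add: divide_inverse mult.commute)
  moreover have "((\<lambda>x. (g1 x - g0 x) / h - w x) has_real_derivative (g1' x - g0' x) / h - w' x)
      (at x within {a..b})" if "x \<in> {a..b}" for x
    using assms that unfolding C1_on_def by (intro DERIV_diff DERIV_cdivide) auto
  ultimately show ?thesis unfolding C1_on_def by blast
qed

lemma B1_diff:
  assumes "B1 g" "B1 h"
  shows "B1 (\<lambda>x. g x - h x)"
proof -
  have diff: "C1_on a b (\<lambda>x. g x - h x) (\<lambda>x. g' x - h' x)" if "C1_on a b g g'" "C1_on a b h h'"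
    for a b g' h'
    using C1_on_lin[OF that, of 1 "-1"] by simp
  have "continuous_on {-1..1} (\<lambda>x. g x - h x)" "g 1 - h 1 = g (-1) - h (-1)"
    using assms unfolding B1_def by (auto intro: continuous_on_diff)
  then show ?thesis
    using diff[OF B1_C1_on_DL[OF assms(1)] B1_C1_on_DL[OF assms(2)]]
      diff[OF B1_C1_on_DR[OF assms(1)] B1_C1_on_DR[OF assms(2)]]
    unfolding B1_def by blast
qed

lemma B1_diff_quotient:
  assumes "B1 g1" "B1 g0" "B1 w"
  shows "B1 (\<lambda>x. (g1 x - g0 x) / h - w x)"
proof -
  have "continuous_on {-1..1} (\<lambda>x. inverse h * (g1 x - g0 x) - w x)"
    using assms unfolding B1_def by (intro continuous_on_diff continuous_on_mult_left) auto
  then have "continuous_on {-1..1} (\<lambda>x. (g1 x - g0 x) / h - w x)"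
    by (simp add: divide_inverse mult.commute)
  moreover have "(g1 1 - g0 1) / h - w 1 = (g1 (-1) - g0 (-1)) / h - w (-1)"
    using assms unfolding B1_def by simp
  ultimately show ?thesis
    using C1_on_diff_quotient[OF B1_C1_on_DL[OF assms(1)] B1_C1_on_DL[OF assms(2)] B1_C1_on_DL[OF assms(3)]]
      C1_on_diff_quotient[OF B1_C1_on_DR[OF assms(1)] B1_C1_on_DR[OF assms(2)] B1_C1_on_DR[OF assms(3)]]
    unfolding B1_def by blast
qed

lemma DL_diff_quotient:
  assumes "B1 g1" "B1 g0" "B1 w" "x \<in> {-1..0}"
  shows "DL (\<lambda>x. (g1 x - g0 x) / h - w x) x = (DL g1 x - DL g0 x) / h - DL w x"
  using DL_eq_of_C1_on[OF C1_on_diff_quotient[OF B1_C1_on_DL[OF assms(1)]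
        B1_C1_on_DL[OF assms(2)] B1_C1_on_DL[OF assms(3)]] assms(4)] .

lemma DR_diff_quotient:
  assumes "B1 g1" "B1 g0" "B1 w" "x \<in> {0..1}"
  shows "DR (\<lambda>x. (g1 x - g0 x) / h - w x) x = (DR g1 x - DR g0 x) / h - DR w x"
  using DR_eq_of_C1_on[OF C1_on_diff_quotient[OF B1_C1_on_DR[OF assms(1)]
        B1_C1_on_DR[OF assms(2)] B1_C1_on_DR[OF assms(3)]] assms(4)] .

lemma abs_le_normB1:
  assumes "B1 g"
  shows "x \<in> {-1..1} \<Longrightarrow> \<bar>g x\<bar> \<le> normB1 g"
    and "x \<in> {-1..0} \<Longrightarrow> \<bar>DL g x\<bar> \<le> normB1 g"
    and "x \<in> {0..1} \<Longrightarrow> \<bar>DR g x\<bar> \<le> normB1 g"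
proof -
  have cg: "continuous_on {-1..1} g" using assms unfolding B1_def by auto
  have c: "continuous_on {-1..0} (\<lambda>x. \<bar>g x\<bar>)" "continuous_on {0..1} (\<lambda>x. \<bar>g x\<bar>)"
    using continuous_on_subset[OF continuous_on_rabs[OF cg]] by auto
  have c': "continuous_on {-1..0} (\<lambda>x. \<bar>DL g x\<bar>)" "continuous_on {0..1} (\<lambda>x. \<bar>DR g x\<bar>)"
    using B1_C1_on_DL[OF assms] B1_C1_on_DR[OF assms] unfolding C1_on_def
    by (auto intro: continuous_on_rabs)
  note b = continuous_on_Icc_bdd(2)[OF c(1)] continuous_on_Icc_bdd(2)[OF c(2)]
    continuous_on_Icc_bdd(2)[OF c'(1)] continuous_on_Icc_bdd(2)[OF c'(2)]
  show "x \<in> {-1..1} \<Longrightarrow> \<bar>g x\<bar> \<le> normB1 g"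
  proof (cases "x \<le> 0")
    case True
    assume "x \<in> {-1..1}"
    then have "\<bar>g x\<bar> \<le> (SUP x\<in>{-1..0}. \<bar>g x\<bar>)" using True b(1) by (intro cSUP_upper) auto
    then show ?thesis unfolding normB1_def by linarith
  next
    case False
    assume "x \<in> {-1..1}"
    then have "\<bar>g x\<bar> \<le> (SUP x\<in>{0..1}. \<bar>g x\<bar>)" using False b(2) by (intro cSUP_upper) auto
    then show ?thesis unfolding normB1_def by linarith
  qed
  show "x \<in> {-1..0} \<Longrightarrow> \<bar>DL g x\<bar> \<le> normB1 g"
    using cSUP_upper[OF _ b(3)] unfolding normB1_def by fastforce
  show "x \<in> {0..1} \<Longrightarrow> \<bar>DR g x\<bar> \<le> normB1 g"
    using cSUP_upper[OF _ b(4)] unfolding normB1_def by fastforce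
qed

lemma C1_on_continuous_on: "C1_on c d g g' \<Longrightarrow> continuous_on {c..d} g"
  unfolding C1_on_def by (intro DERIV_continuous_on) auto

lemma C1_on_has_real_derivative_at:
  assumes "C1_on c d g g'" "c < x" "x < d"
  shows "(g has_real_derivative g' x) (at x)"
proof -
  have "(g has_real_derivative g' x) (at x within {c..d})"
    using assms unfolding C1_on_def by auto
  then show ?thesis using at_within_Icc_at[of c x d] assms(2,3) by simp
qed

lemma C1_on_lower_slope:
  assumes "C1_on c d g g'" "c \<le> a" "a \<le> b" "b \<le> d" "\<And>x. x \<in> {a..b} \<Longrightarrow> g' x \<ge> L"
  shows "g b - g a \<ge> L * (b - a)"
proof -
  let ?h = "\<lambda>x. g x - L * x"
  have "continuous_on {a..b} g"
    using continuous_on_subset[OF C1_on_continuous_on[OF assms(1)]] assms(2-4) by auto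
  then have cont: "continuous_on {a..b} ?h" by (auto intro!: continuous_intros)
  have der: "\<exists>y. DERIV ?h x :> y \<and> y \<ge> 0" if "a < x" "x < b" for x
  proof -
    have "DERIV g x :> g' x"
      using C1_on_has_real_derivative_at[OF assms(1)] that assms(2-4) by simp
    then have "DERIV ?h x :> g' x - L" by (auto intro!: derivative_eq_intros)
    then show ?thesis using assms(5)[of x] that by auto
  qed
  have "?h a \<le> ?h b" by (rule DERIV_nonneg_imp_increasing_open[OF assms(3) der cont])
  then show ?thesis by (simp add: algebra_simps)
qed

lemma C1_on_upper_slope:
  assumes "C1_on c d g g'" "c \<le> a" "a \<le> b" "b \<le> d" "\<And>x. x \<in> {a..b} \<Longrightarrow> g' x \<le> K"
  shows "g b - g a \<le> K * (b - a)"
proof -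
  have "C1_on c d (\<lambda>x. (-1) * g x + 0 * g x) (\<lambda>x. (-1) * g' x + 0 * g' x)"
    by (rule C1_on_lin[OF assms(1) assms(1)])
  then have "C1_on c d (\<lambda>x. - g x) (\<lambda>x. - g' x)" by simp
  from C1_on_lower_slope[OF this assms(2-4), of "-K"] assms(5) show ?thesis
    by (simp add: algebra_simps)
qed

lemma C1_on_abs_slope:
  assumes "C1_on c d g g'" "c \<le> a" "a \<le> b" "b \<le> d" "\<And>x. x \<in> {a..b} \<Longrightarrow> \<bar>g' x\<bar> \<le> K"
  shows "\<bar>g b - g a\<bar> \<le> K * (b - a)"
  using C1_on_upper_slope[OF assms(1-4), of K] C1_on_lower_slope[OF assms(1-4), of "-K"] assms(5)
  by (force simp: abs_le_iff)

section \<open>Piecewise expanding unimodal maps\<close>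

lemma U1_B1: "U1 g \<Longrightarrow> B1 g"
  unfolding U1_def by auto

lemma U1_C1_on_left: "U1 g \<Longrightarrow> C1_on (-1) 0 g (DL g)"
  by (rule B1_C1_on_DL[OF U1_B1])

lemma U1_C1_on_right: "U1 g \<Longrightarrow> C1_on 0 1 g (DR g)"
  by (rule B1_C1_on_DR[OF U1_B1])

lemma U1_DL_gt_1:
  assumes "U1 g" "x \<in> {-1..0}"
  shows "DL g x > 1"
proof -
  have "continuous_on {-1..0} (DL g)"
    using U1_C1_on_left[OF assms(1)] unfolding C1_on_def by auto
  then have "(INF x\<in>{-1..0}. DL g x) \<le> DL g x"
    by (rule cINF_lower[OF continuous_on_Icc_bdd(1) assms(2)])
  then show ?thesis using assms(1) unfolding U1_def by linarith
qed

lemma U1_DR_lt_neg_1: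
  assumes "U1 g" "x \<in> {0..1}"
  shows "DR g x < -1"
proof -
  have "continuous_on {0..1} (DR g)"
    using U1_C1_on_right[OF assms(1)] unfolding C1_on_def by auto
  then have "DR g x \<le> (SUP x\<in>{0..1}. DR g x)"
    by (rule cSUP_upper[OF assms(2) continuous_on_Icc_bdd(2)])
  then show ?thesis using assms(1) unfolding U1_def by linarith
qed

lemma U1_abs_Df_gt_1:
  assumes "U1 g" "x \<in> {-1..1}"
  shows "\<bar>Df g x\<bar> > 1"
  using U1_DL_gt_1[OF assms(1), of x] U1_DR_lt_neg_1[OF assms(1), of x] assms(2)
  by (auto simp: Df_def)

lemma U1_mono_left:
  assumes "U1 g" "-1 \<le> a" "a \<le> b" "b \<le> 0"
  shows "g a \<le> g b"
proof -
  have "DL g x \<ge> 0" if "x \<in> {a..b}" for x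
    using U1_DL_gt_1[OF assms(1), of x] that assms by auto
  from C1_on_lower_slope[OF U1_C1_on_left[OF assms(1)] assms(2-4) this] show ?thesis by simp
qed

lemma U1_antimono_right:
  assumes "U1 g" "0 \<le> a" "a \<le> b" "b \<le> 1"
  shows "g b \<le> g a"
proof -
  have "DR g x \<le> 0" if "x \<in> {a..b}" for x
    using U1_DR_lt_neg_1[OF assms(1), of x] that assms by auto
  from C1_on_upper_slope[OF U1_C1_on_right[OF assms(1)] assms(2-4) this] show ?thesis by simp
qed

lemma U1_maps_I:
  assumes "U1 g" "x \<in> {-1..1}"
  shows "g x \<in> {-1..1}"
proof (cases "x \<le> 0")
  case True
  have "g (-1) \<le> g x" "g x \<le> g 0"
    using assms(2) True by (auto intro!: U1_mono_left[OF assms(1)])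
  then show ?thesis using assms unfolding U1_def by auto
next
  case False
  have "g 1 \<le> g x" "g x \<le> g 0"
    using assms(2) False by (auto intro!: U1_antimono_right[OF assms(1)])
  then show ?thesis using assms unfolding U1_def by auto
qed

lemma U1_funpow_maps_I:
  assumes "U1 g" "x \<in> {-1..1}"
  shows "(g ^^ n) x \<in> {-1..1}"
  by (induction n) (use assms U1_maps_I[OF assms(1)] in simp_all)

lemma U1_lipschitz:
  assumes U: "U1 g" and KL: "\<And>x. x \<in> {-1..0} \<Longrightarrow> \<bar>DL g x\<bar> \<le> K"
    and KR: "\<And>x. x \<in> {0..1} \<Longrightarrow> \<bar>DR g x\<bar> \<le> K" and uw: "u \<in> {-1..1}" "w \<in> {-1..1}"
  shows "\<bar>g w - g u\<bar> \<le> K * \<bar>w - u\<bar>"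
proof -
  have ordered: "\<bar>g b - g a\<bar> \<le> K * (b - a)" if "-1 \<le> a" "a \<le> b" "b \<le> 1" for a b
  proof -
    consider "b \<le> 0" | "0 \<le> a" | "a < 0" "0 < b" by linarith
    then show ?thesis
    proof cases
      case 1
      then show ?thesis using that KL by (intro C1_on_abs_slope[OF U1_C1_on_left[OF U]]) auto
    next
      case 2
      then show ?thesis using that KR by (intro C1_on_abs_slope[OF U1_C1_on_right[OF U]]) auto
    next
      case 3
      have "\<bar>g 0 - g a\<bar> \<le> K * (0 - a)"
        using that 3 KL by (intro C1_on_abs_slope[OF U1_C1_on_left[OF U]]) auto
      moreover have "\<bar>g b - g 0\<bar> \<le> K * (b - 0)"
        using that 3 KR by (intro C1_on_abs_slope[OF U1_C1_on_right[OF U]]) auto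
      ultimately show ?thesis by (simp add: algebra_simps)
    qed
  qed
  show ?thesis
    using ordered[of u w] ordered[of w u] uw by (cases "u \<le> w") (auto simp: abs_minus_commute)
qed

lemma U1_funpow_lipschitz:
  assumes U: "U1 g" and KL: "\<And>x. x \<in> {-1..0} \<Longrightarrow> \<bar>DL g x\<bar> \<le> K"
    and KR: "\<And>x. x \<in> {0..1} \<Longrightarrow> \<bar>DR g x\<bar> \<le> K" and K: "K \<ge> 0"
    and uw: "u \<in> {-1..1}" "w \<in> {-1..1}"
  shows "\<bar>(g ^^ k) u - (g ^^ k) w\<bar> \<le> K ^ k * \<bar>u - w\<bar>"
proof (induction k)
  case 0
  then show ?case by simp
next
  case (Suc k)
  have "\<bar>g ((g ^^ k) u) - g ((g ^^ k) w)\<bar> \<le> K * \<bar>(g ^^ k) u - (g ^^ k) w\<bar>"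
    using U1_lipschitz[OF U KL KR U1_funpow_maps_I[OF U uw(2)] U1_funpow_maps_I[OF U uw(1)]]
    by (simp add: abs_minus_commute)
  also have "\<dots> \<le> K * (K ^ k * \<bar>u - w\<bar>)" using Suc K by (intro mult_left_mono) auto
  finally show ?case by simp
qed

lemma U1_expand_left:
  assumes U: "U1 g" and ab: "a \<in> {-1..0}" "b \<in> {-1..0}"
    and D: "\<And>x. min a b \<le> x \<Longrightarrow> x \<le> max a b \<Longrightarrow> DL g x \<ge> L"
  shows "\<bar>g a - g b\<bar> \<ge> L * \<bar>a - b\<bar>"
  using C1_on_lower_slope[OF U1_C1_on_left[OF U], of a b L]
    C1_on_lower_slope[OF U1_C1_on_left[OF U], of b a L] ab D
  by (cases "a \<le> b") (auto simp: algebra_simps)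

lemma U1_expand_right:
  assumes U: "U1 g" and ab: "a \<in> {0..1}" "b \<in> {0..1}"
    and D: "\<And>x. min a b \<le> x \<Longrightarrow> x \<le> max a b \<Longrightarrow> DR g x \<le> -L"
  shows "\<bar>g a - g b\<bar> \<ge> L * \<bar>a - b\<bar>"
  using C1_on_upper_slope[OF U1_C1_on_right[OF U], of a b "-L"]
    C1_on_upper_slope[OF U1_C1_on_right[OF U], of b a "-L"] ab D
  by (cases "a \<le> b") (auto simp: algebra_simps)

lemma Dfn_Suc: "Dfn g (Suc m) y = Dfn g m y * Df g ((g ^^ m) y)"
  unfolding Dfn_def by simp

lemma U1_Dfn_nonzero:
  assumes "U1 g" "y \<in> {-1..1}"
  shows "Dfn g j y \<noteq> 0"
proof -
  have "Df g ((g ^^ i) y) \<noteq> 0" for i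
    using U1_abs_Df_gt_1[OF assms(1) U1_funpow_maps_I[OF assms, of i]] by auto
  then show ?thesis unfolding Dfn_def by simp
qed

lemma abs_Dfn_ge_power:
  assumes "\<And>i. i < j \<Longrightarrow> \<bar>Df g ((g ^^ i) y)\<bar> \<ge> lam" "lam \<ge> 0"
  shows "\<bar>Dfn g j y\<bar> \<ge> lam ^ j"
proof -
  have "lam ^ j = (\<Prod>i<j. lam)" by simp
  also have "\<dots> \<le> (\<Prod>i<j. \<bar>Df g ((g ^^ i) y)\<bar>)" using assms by (intro prod_mono) auto
  also have "\<dots> = \<bar>Dfn g j y\<bar>" unfolding Dfn_def by (simp add: abs_prod)
  finally show ?thesis .
qed

lemma crit_periodic_prime_period:
  assumes "crit_periodic g"
  shows "prime_period g > 0" "(g ^^ prime_period g) 0 = 0"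
    "\<And>k. 0 < k \<Longrightarrow> k < prime_period g \<Longrightarrow> (g ^^ k) 0 \<noteq> 0"
proof -
  have ex: "\<exists>n. n > 0 \<and> (g ^^ n) 0 = 0" using assms unfolding crit_periodic_def by auto
  show "prime_period g > 0" "(g ^^ prime_period g) 0 = 0"
    using LeastI_ex[OF ex] unfolding prime_period_def by auto
  show "\<And>k. 0 < k \<Longrightarrow> k < prime_period g \<Longrightarrow> (g ^^ k) 0 \<noteq> 0"
    using not_less_Least unfolding prime_period_def by blast
qed

lemma U1_uniform_expansion:
  assumes "U1 g"
  obtains lam where "lam > 1" "\<And>x. x \<in> {-1..1} \<Longrightarrow> lam \<le> \<bar>Df g x\<bar>"
proof
  let ?lam = "min (INF x\<in>{-1..0}. DL g x) (- (SUP x\<in>{0..1}. DR g x))"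
  show "?lam > 1" using assms unfolding U1_def by auto
  have cL: "continuous_on {-1..0} (DL g)" and cR: "continuous_on {0..1} (DR g)"
    using U1_C1_on_left[OF assms] U1_C1_on_right[OF assms] unfolding C1_on_def by auto
  fix x :: real assume x: "x \<in> {-1..1}"
  show "?lam \<le> \<bar>Df g x\<bar>"
  proof (cases "x \<le> 0")
    case True
    then have "(INF x\<in>{-1..0}. DL g x) \<le> DL g x"
      using x by (intro cINF_lower[OF continuous_on_Icc_bdd(1)[OF cL]]) auto
    then show ?thesis using True by (simp add: Df_def)
  next
    case False
    then have "DR g x \<le> (SUP x\<in>{0..1}. DR g x)"
      using x by (intro cSUP_upper[OF _ continuous_on_Icc_bdd(2)[OF cR]]) auto
    then show ?thesis using False U1_DR_lt_neg_1[OF assms, of x] x by (simp add: Df_def)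
  qed
qed

lemma U1_has_derivative_Df_within_branch:
  assumes U: "U1 g" and y0: "y0 \<in> {-1..1}" "y0 \<noteq> 0"
    and y: "(y \<longlongrightarrow> y0) F" and yI: "eventually (\<lambda>a. y a \<in> {-1..1}) F"
  obtains S where "(g has_real_derivative Df g y0) (at y0 within S)" "eventually (\<lambda>a. y a \<in> S) F"
proof (cases "y0 < 0")
  case True
  have "eventually (\<lambda>a. y a < 0) F" using y True by (auto dest: order_tendstoD)
  then have "eventually (\<lambda>a. y a \<in> {-1..0}) F" using yI by eventually_elim auto
  moreover have "(g has_real_derivative Df g y0) (at y0 within {-1..0})"
    using U1_C1_on_left[OF U] True y0 unfolding C1_on_def Df_def by auto
  ultimately show ?thesis using that by blast
next
  case False
  then have pos: "y0 > 0" using y0 by auto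
  have "eventually (\<lambda>a. y a > 0) F" using y pos by (auto dest: order_tendstoD)
  then have "eventually (\<lambda>a. y a \<in> {0..1}) F" using yI by eventually_elim auto
  moreover have "(g has_real_derivative Df g y0) (at y0 within {0..1})"
    using U1_C1_on_right[OF U] pos y0 unfolding C1_on_def Df_def by auto
  ultimately show ?thesis using that by blast
qed

section \<open>The critical orbit and its tangent\<close>

definition crit_orbit :: "(real \<Rightarrow> real) \<Rightarrow> nat \<Rightarrow> real" where
  "crit_orbit g n = (g ^^ n) 0"

text \<open>Solution of the variational equation along the orbit of \<open>y\<close> with initial value \<open>d\<close>:
  for a family with \<open>\<partial>\<^sub>t f\<^sub>t = v\<^sub>t\<close> and \<open>g = f\<^sub>t\<close>, \<open>w = v\<^sub>t\<close>, it is the \<open>t\<close>-derivative of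
  \<open>f\<^sub>t\<^sup>n(y\<^sub>t)\<close> when \<open>y\<^sub>t\<close> has derivative \<open>d\<close>, as long as the orbit avoids the critical point.\<close>
primrec orbit_tangent ::
  "(real \<Rightarrow> real) \<Rightarrow> (real \<Rightarrow> real) \<Rightarrow> real \<Rightarrow> real \<Rightarrow> nat \<Rightarrow> real" where
  "orbit_tangent g w y d 0 = d"
| "orbit_tangent g w y d (Suc n) = Df g ((g ^^ n) y) * orbit_tangent g w y d n + w ((g ^^ n) y)"

primrec crit_tangent :: "(real \<Rightarrow> real) \<Rightarrow> (real \<Rightarrow> real) \<Rightarrow> nat \<Rightarrow> real" where
  "crit_tangent g w 0 = 0"
| "crit_tangent g w (Suc n) = Df g (crit_orbit g n) * crit_tangent g w n + w (crit_orbit g n)"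

lemma crit_orbit_0 [simp]: "crit_orbit g 0 = 0"
  unfolding crit_orbit_def by simp

lemma crit_orbit_Suc: "crit_orbit g (Suc n) = g (crit_orbit g n)"
  unfolding crit_orbit_def by simp

lemma crit_orbit_add: "crit_orbit g (N + r) = (g ^^ r) (crit_orbit g N)"
  unfolding crit_orbit_def by (subst add.commute) (simp add: funpow_add)

lemma U1_crit_orbit_in_I: "U1 g \<Longrightarrow> crit_orbit g n \<in> {-1..1}"
  unfolding crit_orbit_def by (rule U1_funpow_maps_I) auto

lemma crit_tangent_eq_orbit_tangent: "crit_tangent g w n = orbit_tangent g w 0 0 n"
  by (induction n) (simp_all add: crit_orbit_def)

lemma crit_tangent_add:
  "crit_tangent g w (N + r) = orbit_tangent g w (crit_orbit g N) (crit_tangent g w N) r"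
  by (induction r) (simp_all add: crit_orbit_add)

lemma orbit_tangent_affine:
  "orbit_tangent g w y d r = (\<Prod>j<r. Df g ((g ^^ j) y)) * d + orbit_tangent g w y 0 r"
  by (induction r) (simp_all add: algebra_simps)

lemma crit_tangent_Suc_eq_Dfn_sum:
  assumes "U1 g"
  shows "crit_tangent g w (Suc m) = Dfn g m (g 0) * (\<Sum>j<Suc m. w (crit_orbit g j) / Dfn g j (g 0))"
proof (induction m)
  case 0
  then show ?case by (simp add: Dfn_def)
next
  case (Suc m)
  have nz: "Dfn g (Suc m) (g 0) \<noteq> 0"
    by (rule U1_Dfn_nonzero[OF assms U1_maps_I[OF assms]]) auto
  have "(g ^^ m) (g 0) = crit_orbit g (Suc m)"
    unfolding crit_orbit_def by (simp add: funpow_swap1)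
  then have "Dfn g (Suc m) (g 0) = Dfn g m (g 0) * Df g (crit_orbit g (Suc m))"
    by (simp add: Dfn_Suc)
  then show ?case using Suc.IH nz by (simp add: algebra_simps)
qed

lemma crit_tangent_periodic_eq_J:
  assumes "U1 g" "crit_periodic g"
  shows "crit_tangent g w (prime_period g) = Dfn g (prime_period g - 1) (g 0) * J g w"
  using crit_tangent_Suc_eq_Dfn_sum[OF assms(1), of w "prime_period g - 1"]
    crit_periodic_prime_period(1)[OF assms(2)] assms(2)
  by (simp add: J_def crit_orbit_def)

lemma crit_tangent_prime_period_nonzero_of_J:
  assumes "U1 g" "crit_periodic g" "J g w \<noteq> 0"
  shows "crit_tangent g w (prime_period g) \<noteq> 0"
proof -
  have "g 0 \<in> {-1..1}" using U1_maps_I[OF assms(1), of 0] by simp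
  then show ?thesis
    using crit_tangent_periodic_eq_J[OF assms(1,2)] assms(3) U1_Dfn_nonzero[OF assms(1)] by simp
qed

lemma good_block_expansion_gt_2:
  assumes "crit_periodic g" "good g"
  shows "2 < min \<bar>DR g 0\<bar> \<bar>DL g 0\<bar> * (\<Prod>i<prime_period g - 1. \<bar>Df g (crit_orbit g (Suc i))\<bar>)"
proof -
  have "\<bar>Dfn g (prime_period g - 1) (g 0)\<bar> = (\<Prod>i<prime_period g - 1. \<bar>Df g (crit_orbit g (Suc i))\<bar>)"
    unfolding Dfn_def abs_prod crit_orbit_def by (simp add: funpow_swap1)
  then show ?thesis using assms unfolding good_def by (simp add: mult.commute)
qed

text \<open>\<open>B = V / (lam - 1)\<close> is the repelling level of \<open>d \<mapsto> lam d - V\<close>; above it the tangent grows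
  geometrically.\<close>
lemma crit_tangent_growth:
  assumes lam: "lam > 1" and B: "B * (lam - 1) = V" "B \<ge> 0"
    and Dfb: "\<And>k. \<bar>Df g (crit_orbit g k)\<bar> \<ge> lam" and wb: "\<And>k. \<bar>w (crit_orbit g k)\<bar> \<le> V"
    and start: "\<bar>crit_tangent g w N\<bar> \<ge> B + 1"
  shows "\<bar>crit_tangent g w (N + m)\<bar> \<ge> lam ^ m + B"
proof (induction m)
  case 0
  then show ?case using start by simp
next
  case (Suc m)
  let ?a = "Df g (crit_orbit g (N + m))" and ?d = "crit_tangent g w (N + m)"
  have "\<bar>?a * ?d\<bar> \<ge> lam * (lam ^ m + B)"
    unfolding abs_mult using Dfb[of "N + m"] Suc.IH lam B by (intro mult_mono) auto
  then have "\<bar>?a * ?d + w (crit_orbit g (N + m))\<bar> \<ge> lam * (lam ^ m + B) - V"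
    using wb[of "N + m"] by linarith
  moreover have "lam * (lam ^ m + B) - V = lam ^ Suc m + B" using B by (simp add: algebra_simps)
  ultimately show ?case by simp
qed

lemma abs_crit_tangent_unbounded:
  assumes U: "U1 g" and w: "B1 w" and np: "\<not> crit_periodic g" and J: "J g w \<noteq> 0"
  shows "\<exists>N. C < \<bar>crit_tangent g w N\<bar>"
proof -
  obtain lam where lam: "lam > 1" "\<And>x. x \<in> {-1..1} \<Longrightarrow> lam \<le> \<bar>Df g x\<bar>"
    using U1_uniform_expansion[OF U] by blast
  have Dfn_ge: "\<bar>Dfn g i (g 0)\<bar> \<ge> lam ^ i" for i
    using lam U1_funpow_maps_I[OF U U1_maps_I[OF U]] by (intro abs_Dfn_ge_power) auto
  define a where "a i = w (crit_orbit g i) / Dfn g i (g 0)" for i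
  have bound: "norm (a i) \<le> normB1 w * (1 / lam) ^ i" for i
  proof -
    have "\<bar>w (crit_orbit g i)\<bar> / \<bar>Dfn g i (g 0)\<bar> \<le> normB1 w / lam ^ i"
      using abs_le_normB1(1)[OF w U1_crit_orbit_in_I[OF U]] abs_le_normB1(1)[OF w, of 0]
        Dfn_ge[of i] lam(1)
      by (intro frac_le) auto
    then show ?thesis unfolding a_def by (simp add: abs_divide power_divide)
  qed
  have "summable (\<lambda>i. normB1 w * (1 / lam) ^ i)"
    using lam by (intro summable_mult summable_geometric) auto
  then have "summable a" by (rule summable_comparison_test'[OF _ bound])
  then have "(\<lambda>n. \<Sum>i<n. a i) \<longlonglongrightarrow> J g w"
    using np summable_LIMSEQ unfolding J_def a_def crit_orbit_def by auto
  then have "eventually (\<lambda>n. \<bar>\<Sum>i<n. a i\<bar> > \<bar>J g w\<bar> / 2) sequentially"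
    using J by (intro order_tendstoD(1)[OF tendsto_rabs]) auto
  then obtain N1 where N1: "\<And>n. n \<ge> N1 \<Longrightarrow> \<bar>\<Sum>i<n. a i\<bar> > \<bar>J g w\<bar> / 2"
    unfolding eventually_sequentially by blast
  obtain m where m: "\<bar>C\<bar> * 2 / \<bar>J g w\<bar> < lam ^ m" using real_arch_pow[OF lam(1)] by blast
  have "lam ^ m \<le> lam ^ (N1 + m)" using lam by (intro power_increasing) auto
  then have "lam ^ m * (\<bar>J g w\<bar> / 2) \<le> \<bar>Dfn g (N1 + m) (g 0)\<bar> * \<bar>\<Sum>i<Suc (N1 + m). a i\<bar>"
    using Dfn_ge[of "N1 + m"] N1[of "Suc (N1 + m)"] by (intro mult_mono) auto
  also have "\<dots> = \<bar>crit_tangent g w (Suc (N1 + m))\<bar>"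
    unfolding crit_tangent_Suc_eq_Dfn_sum[OF U] a_def abs_mult ..
  finally have "lam ^ m * (\<bar>J g w\<bar> / 2) \<le> \<bar>crit_tangent g w (Suc (N1 + m))\<bar>" .
  moreover have "\<bar>C\<bar> < lam ^ m * (\<bar>J g w\<bar> / 2)"
    using m J by (simp add: field_simps)
  ultimately have "C < \<bar>crit_tangent g w (Suc (N1 + m))\<bar>" by linarith
  then show ?thesis ..
qed

lemma crit_orbit_blocks_bound:
  assumes U: "U1 g" and KL: "\<And>x. x \<in> {-1..0} \<Longrightarrow> \<bar>DL g x\<bar> \<le> K"
    and KR: "\<And>x. x \<in> {0..1} \<Longrightarrow> \<bar>DR g x\<bar> \<le> K" and K: "K \<ge> 0"
  shows "\<bar>crit_orbit g (m * p)\<bar> \<le> (K ^ p + 1) ^ m * \<bar>crit_orbit g p\<bar>"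
proof (induction m)
  case 0
  then show ?case by simp
next
  case (Suc m)
  let ?a = "crit_orbit g p" and ?y = "crit_orbit g (m * p)"
  have "crit_orbit g (Suc m * p) = (g ^^ p) ?y" "(g ^^ p) 0 = ?a"
    using crit_orbit_add[of g "m * p" p] by (simp_all add: add.commute crit_orbit_def)
  moreover have "\<bar>(g ^^ p) ?y - (g ^^ p) 0\<bar> \<le> K ^ p * \<bar>?y - 0\<bar>"
    by (rule U1_funpow_lipschitz[OF U KL KR K U1_crit_orbit_in_I[OF U]]) auto
  ultimately have "\<bar>crit_orbit g (Suc m * p)\<bar> \<le> K ^ p * \<bar>?y\<bar> + \<bar>?a\<bar>" by simp
  also have "\<dots> \<le> K ^ p * ((K ^ p + 1) ^ m * \<bar>?a\<bar>) + (K ^ p + 1) ^ m * \<bar>?a\<bar>"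
  proof (intro add_mono mult_left_mono)
    show "\<bar>?a\<bar> \<le> (K ^ p + 1) ^ m * \<bar>?a\<bar>"
      using mult_right_mono[OF one_le_power[of "K ^ p + 1" m], of "\<bar>?a\<bar>"] K by simp
  qed (use Suc K in auto)
  also have "\<dots> = (K ^ p + 1) ^ Suc m * \<bar>?a\<bar>" by (simp add: algebra_simps)
  finally show ?case .
qed

section \<open>Expansion along a block of the periodic critical orbit\<close>

lemma U1_Df_continuous_off_crit:
  assumes U: "U1 g" and z: "z \<in> {-1..1}" "z \<noteq> 0" and \<epsilon>: "\<epsilon> > 0"
  obtains \<rho> where "\<rho> > 0" "\<rho> < \<bar>z\<bar>"
    "\<And>x. x \<in> {-1..1} \<Longrightarrow> \<bar>x - z\<bar> < \<rho> \<Longrightarrow> \<bar>Df g x - Df g z\<bar> \<le> \<epsilon>"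
proof (cases "z < 0")
  case True
  have c: "continuous_on {-1..0} (DL g)" using U1_C1_on_left[OF U] unfolding C1_on_def by auto
  have zS: "z \<in> {-1..0}" using z True by auto
  obtain d where d: "d > 0"
    "\<And>x. x \<in> {-1..0} \<Longrightarrow> \<bar>x - z\<bar> < d \<Longrightarrow> \<bar>DL g x - DL g z\<bar> \<le> \<epsilon>"
    using continuous_on_abs_diff_le[OF c zS \<epsilon>] by blast
  show ?thesis
  proof (rule that[of "min d (\<bar>z\<bar> / 2)"])
    fix x assume "x \<in> {-1..1}" "\<bar>x - z\<bar> < min d (\<bar>z\<bar> / 2)"
    moreover from this have "x < 0" using True by (simp add: abs_less_iff)
    ultimately show "\<bar>Df g x - Df g z\<bar> \<le> \<epsilon>" using d True by (auto simp: Df_def)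
  qed (use d True in auto)
next
  case False
  then have pos: "z > 0" using z by auto
  have c: "continuous_on {0..1} (DR g)" using U1_C1_on_right[OF U] unfolding C1_on_def by auto
  have zS: "z \<in> {0..1}" using z pos by auto
  obtain d where d: "d > 0"
    "\<And>x. x \<in> {0..1} \<Longrightarrow> \<bar>x - z\<bar> < d \<Longrightarrow> \<bar>DR g x - DR g z\<bar> \<le> \<epsilon>"
    using continuous_on_abs_diff_le[OF c zS \<epsilon>] by blast
  show ?thesis
  proof (rule that[of "min d (\<bar>z\<bar> / 2)"])
    fix x assume "x \<in> {-1..1}" "\<bar>x - z\<bar> < min d (\<bar>z\<bar> / 2)"
    moreover from this have "x > 0" using pos abs_less_iff[of "x - z" "\<bar>z\<bar> / 2"] by auto
    ultimately show "\<bar>Df g x - Df g z\<bar> \<le> \<epsilon>" using d pos by (auto simp: Df_def)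
  qed (use d pos in auto)
qed

lemma U1_Df_continuous_along_crit_orbit:
  assumes U: "U1 g" and nz: "\<And>j. 1 \<le> j \<Longrightarrow> j < p \<Longrightarrow> crit_orbit g j \<noteq> 0" and \<epsilon>: "\<epsilon> > 0"
  obtains \<rho> where "\<And>i. i < p - 1 \<Longrightarrow> \<rho> i > 0 \<and> \<rho> i < \<bar>crit_orbit g (Suc i)\<bar> \<and>
     (\<forall>x\<in>{-1..1}. \<bar>x - crit_orbit g (Suc i)\<bar> < \<rho> i \<longrightarrow>
        \<bar>Df g x - Df g (crit_orbit g (Suc i))\<bar> \<le> \<epsilon>)"
proof -
  have "\<forall>i. \<exists>r. i < p - 1 \<longrightarrow> r > 0 \<and> r < \<bar>crit_orbit g (Suc i)\<bar> \<and>
     (\<forall>x\<in>{-1..1}. \<bar>x - crit_orbit g (Suc i)\<bar> < r \<longrightarrow>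
        \<bar>Df g x - Df g (crit_orbit g (Suc i))\<bar> \<le> \<epsilon>)"
  proof
    fix i
    show "\<exists>r. i < p - 1 \<longrightarrow> r > 0 \<and> r < \<bar>crit_orbit g (Suc i)\<bar> \<and>
     (\<forall>x\<in>{-1..1}. \<bar>x - crit_orbit g (Suc i)\<bar> < r \<longrightarrow>
        \<bar>Df g x - Df g (crit_orbit g (Suc i))\<bar> \<le> \<epsilon>)"
    proof (cases "i < p - 1")
      case True
      then have "crit_orbit g (Suc i) \<noteq> 0" using nz[of "Suc i"] by auto
      with U1_Df_continuous_off_crit[OF U U1_crit_orbit_in_I[OF U] _ \<epsilon>] show ?thesis by metis
    qed auto
  qed
  then obtain \<rho> where "\<forall>i. i < p - 1 \<longrightarrow> \<rho> i > 0 \<and> \<rho> i < \<bar>crit_orbit g (Suc i)\<bar> \<and>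
     (\<forall>x\<in>{-1..1}. \<bar>x - crit_orbit g (Suc i)\<bar> < \<rho> i \<longrightarrow>
        \<bar>Df g x - Df g (crit_orbit g (Suc i))\<bar> \<le> \<epsilon>)"
    by (rule choice[THEN exE])
  then show ?thesis by (intro that) blast
qed

lemma U1_DL_DR_continuous_at_0:
  assumes U: "U1 g" and \<epsilon>: "\<epsilon> > 0"
  obtains r where "r > 0" "\<And>x. x \<in> {-1..0} \<Longrightarrow> \<bar>x\<bar> < r \<Longrightarrow> \<bar>DL g x - DL g 0\<bar> \<le> \<epsilon>"
    "\<And>x. x \<in> {0..1} \<Longrightarrow> \<bar>x\<bar> < r \<Longrightarrow> \<bar>DR g x - DR g 0\<bar> \<le> \<epsilon>"
proof -
  have cL: "continuous_on {-1..0} (DL g)" and cR: "continuous_on {0..1} (DR g)"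
    using U1_C1_on_left[OF U] U1_C1_on_right[OF U] unfolding C1_on_def by auto
  obtain r1 where "r1 > 0" and r1: "\<And>x. x \<in> {-1..0} \<Longrightarrow> \<bar>x - 0\<bar> < r1 \<Longrightarrow> \<bar>DL g x - DL g 0\<bar> \<le> \<epsilon>"
    using continuous_on_abs_diff_le[OF cL _ \<epsilon>, of 0] by auto
  obtain r2 where "r2 > 0" and r2: "\<And>x. x \<in> {0..1} \<Longrightarrow> \<bar>x - 0\<bar> < r2 \<Longrightarrow> \<bar>DR g x - DR g 0\<bar> \<le> \<epsilon>"
    using continuous_on_abs_diff_le[OF cR _ \<epsilon>, of 0] by auto
  show ?thesis
    using r1 r2 \<open>r1 > 0\<close> \<open>r2 > 0\<close> by (intro that[of "min r1 r2"]) auto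
qed

lemma expansion_near_noncritical:
  assumes U: "U1 g" and U0: "U1 g0"
    and close: "\<And>x. x \<in> {-1..1} \<Longrightarrow> \<bar>Df g x - Df g0 x\<bar> \<le> \<epsilon>/2"
    and z: "z \<in> {-1..1}" "\<rho> < \<bar>z\<bar>"
    and cont: "\<And>x. x \<in> {-1..1} \<Longrightarrow> \<bar>x - z\<bar> < \<rho> \<Longrightarrow> \<bar>Df g0 x - Df g0 z\<bar> \<le> \<epsilon>/2"
    and u: "u \<in> {-1..1}" "\<bar>u - z\<bar> < \<rho>" and w: "w \<in> {-1..1}" "\<bar>w - z\<bar> < \<rho>"
  shows "\<bar>Df g u\<bar> \<ge> \<bar>Df g0 z\<bar> - \<epsilon>" "\<bar>g u - g w\<bar> \<ge> (\<bar>Df g0 z\<bar> - \<epsilon>) * \<bar>u - w\<bar>"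
proof -
  let ?c = "\<bar>Df g0 z\<bar> - \<epsilon>"
  have seg: "\<bar>x - z\<bar> < \<rho> \<and> x \<in> {-1..1}" if "min u w \<le> x" "x \<le> max u w" for x
    using that u w by (auto simp: abs_less_iff)
  have near: "\<bar>Df g x - Df g0 z\<bar> \<le> \<epsilon>" if "min u w \<le> x" "x \<le> max u w" for x
    using close[of x] cont[of x] seg[OF that] by linarith
  have same_sign: "x \<noteq> 0 \<and> (x < 0 \<longleftrightarrow> z < 0)" if "min u w \<le> x" "x \<le> max u w" for x
    using seg[OF that] z by (auto simp: abs_less_iff)
  show "\<bar>Df g u\<bar> \<ge> ?c" using near[of u] by auto
  show "\<bar>g u - g w\<bar> \<ge> ?c * \<bar>u - w\<bar>"
  proof (cases "z < 0")
    case True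
    have "DL g x \<ge> ?c" if "min u w \<le> x" "x \<le> max u w" for x
      using near[OF that] same_sign[OF that] seg[OF that] True U1_DL_gt_1[OF U0, of z] z
      by (auto simp: Df_def)
    then show ?thesis
      using same_sign[of u] same_sign[of w] True u w by (intro U1_expand_left[OF U]) auto
  next
    case False
    have "DR g x \<le> - ?c" if "min u w \<le> x" "x \<le> max u w" for x
      using near[OF that] same_sign[OF that] seg[OF that] False U1_DR_lt_neg_1[OF U0, of z] z
      by (auto simp: Df_def)
    then show ?thesis
      using same_sign[of u] same_sign[of w] False z u w by (intro U1_expand_right[OF U]) auto
  qed
qed

lemma expansion_near_crit:
  assumes U: "U1 g" and U0: "U1 g0"
    and closeL: "\<And>x. x \<in> {-1..0} \<Longrightarrow> \<bar>DL g x - DL g0 x\<bar> \<le> \<epsilon>/2"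
    and closeR: "\<And>x. x \<in> {0..1} \<Longrightarrow> \<bar>DR g x - DR g0 x\<bar> \<le> \<epsilon>/2"
    and contL: "\<And>x. x \<in> {-1..0} \<Longrightarrow> \<bar>x\<bar> < \<rho> \<Longrightarrow> \<bar>DL g0 x - DL g0 0\<bar> \<le> \<epsilon>/2"
    and contR: "\<And>x. x \<in> {0..1} \<Longrightarrow> \<bar>x\<bar> < \<rho> \<Longrightarrow> \<bar>DR g0 x - DR g0 0\<bar> \<le> \<epsilon>/2"
    and y: "\<bar>y\<bar> < \<rho>" "y \<in> {-1..1}" and \<epsilon>: "\<epsilon> < 1"
  shows "\<bar>Df g y\<bar> \<ge> min \<bar>DR g0 0\<bar> \<bar>DL g0 0\<bar> - \<epsilon>"
    "\<bar>g y - g 0\<bar> \<ge> (min \<bar>DR g0 0\<bar> \<bar>DL g0 0\<bar> - \<epsilon>) * \<bar>y\<bar>"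
proof -
  let ?\<mu> = "min \<bar>DR g0 0\<bar> \<bar>DL g0 0\<bar>"
  have DL0: "DL g0 0 > 1" and DR0: "DR g0 0 < -1"
    using U1_DL_gt_1[OF U0] U1_DR_lt_neg_1[OF U0] by auto
  then have \<mu>L: "?\<mu> \<le> DL g0 0" and \<mu>R: "?\<mu> \<le> - DR g0 0" by auto
  have "\<bar>Df g y\<bar> \<ge> ?\<mu> - \<epsilon> \<and> \<bar>g y - g 0\<bar> \<ge> (?\<mu> - \<epsilon>) * \<bar>y\<bar>"
  proof (cases "y \<le> 0")
    case True
    have b: "DL g x \<ge> ?\<mu> - \<epsilon>" if "min y 0 \<le> x" "x \<le> max y 0" for x
    proof -
      have "x \<in> {-1..0}" "\<bar>x\<bar> < \<rho>" using that True y by auto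
      then show ?thesis using closeL[of x] contL[of x] \<mu>L unfolding abs_le_iff by linarith
    qed
    have "\<bar>g y - g 0\<bar> \<ge> (?\<mu> - \<epsilon>) * \<bar>y - 0\<bar>"
      by (rule U1_expand_left[OF U _ _ b]) (use True y in auto)
    then show ?thesis using b[of y] True DL0 \<epsilon> by (auto simp: Df_def)
  next
    case False
    have b: "DR g x \<le> -(?\<mu> - \<epsilon>)" if "min y 0 \<le> x" "x \<le> max y 0" for x
    proof -
      have "x \<in> {0..1}" "\<bar>x\<bar> < \<rho>" using that False y by auto
      then show ?thesis using closeR[of x] contR[of x] \<mu>R unfolding abs_le_iff by linarith
    qed
    have "\<bar>g y - g 0\<bar> \<ge> (?\<mu> - \<epsilon>) * \<bar>y - 0\<bar>"
      by (rule U1_expand_right[OF U _ _ b]) (use False y in auto)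
    then show ?thesis using b[of y] False DR0 \<epsilon> by (auto simp: Df_def)
  qed
  then show "\<bar>Df g y\<bar> \<ge> ?\<mu> - \<epsilon>" "\<bar>g y - g 0\<bar> \<ge> (?\<mu> - \<epsilon>) * \<bar>y\<bar>" by auto
qed

lemma block_expansion:
  fixes g g0 :: "real \<Rightarrow> real" and \<epsilon> :: real and \<rho> :: "nat \<Rightarrow> real"
  defines "\<mu> \<equiv> min \<bar>DR g0 0\<bar> \<bar>DL g0 0\<bar>"
    and "c \<equiv> \<lambda>i. \<bar>Df g0 (crit_orbit g0 (Suc i))\<bar> - \<epsilon>"
  assumes U: "U1 g" and U0: "U1 g0" and \<epsilon>: "0 < \<epsilon>" "\<epsilon> < 1" and p: "p \<ge> 1"
    and closeL: "\<And>x. x \<in> {-1..0} \<Longrightarrow> \<bar>DL g x - DL g0 x\<bar> \<le> \<epsilon>/2"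
    and closeR: "\<And>x. x \<in> {0..1} \<Longrightarrow> \<bar>DR g x - DR g0 x\<bar> \<le> \<epsilon>/2"
    and contL: "\<And>x. x \<in> {-1..0} \<Longrightarrow> \<bar>x\<bar> < r \<Longrightarrow> \<bar>DL g0 x - DL g0 0\<bar> \<le> \<epsilon>/2"
    and contR: "\<And>x. x \<in> {0..1} \<Longrightarrow> \<bar>x\<bar> < r \<Longrightarrow> \<bar>DR g0 x - DR g0 0\<bar> \<le> \<epsilon>/2"
    and y: "\<bar>y\<bar> < r" "y \<in> {-1..1}"
    and orbit: "\<And>i. i < p - 1 \<Longrightarrow> \<rho> i < \<bar>crit_orbit g0 (Suc i)\<bar> \<and>
        (\<forall>x\<in>{-1..1}. \<bar>x - crit_orbit g0 (Suc i)\<bar> < \<rho> i \<longrightarrow>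
          \<bar>Df g0 x - Df g0 (crit_orbit g0 (Suc i))\<bar> \<le> \<epsilon>/2) \<and>
        \<bar>(g ^^ Suc i) y - crit_orbit g0 (Suc i)\<bar> < \<rho> i \<and>
        \<bar>(g ^^ Suc i) 0 - crit_orbit g0 (Suc i)\<bar> < \<rho> i"
  shows "(\<mu> - \<epsilon>) * (\<Prod>i<p - 1. c i) \<le> \<bar>\<Prod>j<p. Df g ((g ^^ j) y)\<bar>"
    and "(\<mu> - \<epsilon>) * (\<Prod>i<p - 1. c i) * \<bar>y\<bar> \<le> \<bar>(g ^^ p) y - (g ^^ p) 0\<bar>"
proof -
  note first = expansion_near_crit[OF U U0 closeL closeR contL contR y \<epsilon>(2), folded \<mu>_def]
  have c0: "c i > 0" for i
    using U1_abs_Df_gt_1[OF U0 U1_crit_orbit_in_I[OF U0], of "Suc i"] \<epsilon> unfolding c_def by linarith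
  have mu: "\<mu> - \<epsilon> > 0"
    using U1_DL_gt_1[OF U0, of 0] U1_DR_lt_neg_1[OF U0, of 0] \<epsilon> unfolding \<mu>_def by auto
  have close: "\<bar>Df g x - Df g0 x\<bar> \<le> \<epsilon>/2" if "x \<in> {-1..1}" for x
    using closeL[of x] closeR[of x] that by (cases "x \<le> 0") (auto simp: Df_def)
  have later: "\<bar>Df g ((g ^^ Suc i) y)\<bar> \<ge> c i \<and>
      \<bar>(g ^^ Suc (Suc i)) y - (g ^^ Suc (Suc i)) 0\<bar> \<ge> c i * \<bar>(g ^^ Suc i) y - (g ^^ Suc i) 0\<bar>"
    if i: "i < p - 1" for i
    using expansion_near_noncritical[OF U U0 close U1_crit_orbit_in_I[OF U0, of "Suc i"],
        where \<rho> = "\<rho> i" and u = "(g ^^ Suc i) y" and w = "(g ^^ Suc i) 0"]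
      orbit[OF i] U1_funpow_maps_I[OF U y(2), of "Suc i"] U1_funpow_maps_I[OF U, of 0 "Suc i"]
    unfolding c_def by simp
  obtain p' where p': "p = Suc p'" using p by (cases p) auto
  have "\<bar>\<Prod>j<p. Df g ((g ^^ j) y)\<bar> = \<bar>Df g y\<bar> * (\<Prod>i<p'. \<bar>Df g ((g ^^ Suc i) y)\<bar>)"
    unfolding p' prod.lessThan_Suc_shift by (simp add: abs_mult abs_prod)
  also have "\<dots> \<ge> (\<mu> - \<epsilon>) * (\<Prod>i<p'. c i)"
    using first later c0 mu p' by (intro mult_mono prod_mono) (auto intro: less_imp_le prod_nonneg)
  finally show "(\<mu> - \<epsilon>) * (\<Prod>i<p - 1. c i) \<le> \<bar>\<Prod>j<p. Df g ((g ^^ j) y)\<bar>"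
    unfolding p' by simp
  have "(\<mu> - \<epsilon>) * (\<Prod>i<k. c i) * \<bar>y\<bar> \<le> \<bar>(g ^^ Suc k) y - (g ^^ Suc k) 0\<bar>" if "k \<le> p'" for k
    using that
  proof (induction k)
    case 0
    then show ?case using first by simp
  next
    case (Suc k)
    have "(\<mu> - \<epsilon>) * (\<Prod>i<Suc k. c i) * \<bar>y\<bar> = c k * ((\<mu> - \<epsilon>) * (\<Prod>i<k. c i) * \<bar>y\<bar>)"
      by simp
    also have "\<dots> \<le> c k * \<bar>(g ^^ Suc k) y - (g ^^ Suc k) 0\<bar>"
      using Suc c0[of k] by (intro mult_left_mono) auto
    also have "\<dots> \<le> \<bar>(g ^^ Suc (Suc k)) y - (g ^^ Suc (Suc k)) 0\<bar>"
      using later[of k] Suc.prems p' by simp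
    finally show ?case .
  qed
  from this[of p'] show "(\<mu> - \<epsilon>) * (\<Prod>i<p - 1. c i) * \<bar>y\<bar> \<le> \<bar>(g ^^ p) y - (g ^^ p) 0\<bar>"
    unfolding p' by simp
qed

text \<open>\<open>Lam\<close> lies strictly between \<open>2\<close> and the block expansion \<open>L\<close>, and \<open>\<eta>\<close> is small enough that
  one block of the tangent recursion \<open>d \<mapsto> P d + W\<close> with \<open>|P| \<ge> Lam\<close>, \<open>|W - w0| \<le> \<eta>\<close> pushes \<open>|d|\<close>
  away from the repelling level \<open>(|w0| + \<eta>) / (Lam - 1)\<close>.\<close>
lemma exists_block_constants:
  fixes w0 L :: real
  assumes w0: "w0 \<noteq> 0" and L: "2 < L"
  obtains Lam \<eta> where "2 < Lam" "Lam < L" "\<eta> > 0" "\<bar>w0\<bar> - \<eta> - (\<bar>w0\<bar> + \<eta>) / (Lam - 1) > 0"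
proof -
  define Lam where "Lam = (2 + L) / 2"
  define \<eta> where "\<eta> = \<bar>w0\<bar> * (Lam - 2) / (2 * Lam)"
  have Lam: "2 < Lam" "Lam < L" using L unfolding Lam_def by auto
  have "(\<bar>w0\<bar> - \<eta>) * (Lam - 1) - (\<bar>w0\<bar> + \<eta>) = \<bar>w0\<bar> * (Lam - 2) / 2"
    using Lam unfolding \<eta>_def by (simp add: field_simps)
  moreover have "\<bar>w0\<bar> * (Lam - 2) / 2 > 0" using w0 Lam by simp
  ultimately have "\<bar>w0\<bar> + \<eta> < (\<bar>w0\<bar> - \<eta>) * (Lam - 1)" by linarith
  then have "\<bar>w0\<bar> - \<eta> - (\<bar>w0\<bar> + \<eta>) / (Lam - 1) > 0"
    using Lam by (simp add: divide_less_eq)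
  moreover have "\<eta> > 0" using w0 Lam unfolding \<eta>_def by auto
  ultimately show ?thesis using Lam that by blast
qed

definition expanding_block ::
  "(real \<Rightarrow> real) \<Rightarrow> (real \<Rightarrow> real) \<Rightarrow> nat \<Rightarrow> real \<Rightarrow> real \<Rightarrow> real \<Rightarrow> real \<Rightarrow> bool" where
  "expanding_block g w p d Lam w0 \<eta> \<longleftrightarrow> (\<forall>y. \<bar>y\<bar> < d \<longrightarrow> y \<in> {-1..1} \<longrightarrow>
     (\<forall>j. 1 \<le> j \<and> j < p \<longrightarrow> (g ^^ j) y \<noteq> 0) \<and>
     Lam \<le> \<bar>\<Prod>j<p. Df g ((g ^^ j) y)\<bar> \<and>
     \<bar>orbit_tangent g w y 0 p - w0\<bar> \<le> \<eta> \<and>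
     Lam * \<bar>y\<bar> \<le> \<bar>(g ^^ p) y - (g ^^ p) 0\<bar>)"

context
  fixes g w :: "real \<Rightarrow> real" and p :: nat and d Lam w0 \<eta> :: real
  assumes U: "U1 g" and p: "p \<ge> 1" and Lam: "Lam \<ge> 2"
    and blk: "expanding_block g w p d Lam w0 \<eta>"
begin

lemma expanding_block_at:
  assumes "\<bar>crit_orbit g (m * p)\<bar> < d"
  shows "\<forall>j. 1 \<le> j \<and> j < p \<longrightarrow> (g ^^ j) (crit_orbit g (m * p)) \<noteq> 0"
    "Lam \<le> \<bar>\<Prod>j<p. Df g ((g ^^ j) (crit_orbit g (m * p)))\<bar>"
    "\<bar>orbit_tangent g w (crit_orbit g (m * p)) 0 p - w0\<bar> \<le> \<eta>"
    "Lam * \<bar>crit_orbit g (m * p)\<bar> \<le> \<bar>crit_orbit g (Suc m * p) - crit_orbit g p\<bar>"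
  using blk assms U1_crit_orbit_in_I[OF U, of "m * p"]
    crit_orbit_add[of g "m * p" p] crit_orbit_def[of g p]
  unfolding expanding_block_def by (auto simp: add.commute)

text \<open>For the block points \<open>y\<^sub>m = g\<^sup>m\<^sup>p(0)\<close> one has \<open>|y\<^sub>m\<^sub>+\<^sub>1 - y\<^sub>1| \<ge> Lam |y\<^sub>m| \<ge> 2 |y\<^sub>1|\<close> inductively.\<close>
lemma block_points_far_from_crit:
  assumes "1 \<le> m" "\<forall>m'<m. \<bar>crit_orbit g (m' * p)\<bar> < d"
  shows "\<bar>crit_orbit g p\<bar> \<le> \<bar>crit_orbit g (m * p)\<bar>"
  using assms
proof (induction m)
  case 0
  then show ?case by simp
next
  case (Suc m)
  show ?case
  proof (cases "m = 0")
    case False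
    then have IH: "\<bar>crit_orbit g p\<bar> \<le> \<bar>crit_orbit g (m * p)\<bar>" using Suc by auto
    have "Lam * \<bar>crit_orbit g (m * p)\<bar> \<le> \<bar>crit_orbit g (Suc m * p) - crit_orbit g p\<bar>"
      using expanding_block_at(4) Suc.prems by auto
    moreover have "2 * \<bar>crit_orbit g p\<bar> \<le> Lam * \<bar>crit_orbit g (m * p)\<bar>"
      using IH Lam by (intro mult_mono) auto
    ultimately show ?thesis by linarith
  qed simp
qed

lemma crit_orbit_nonzero_in_blocks:
  assumes a: "crit_orbit g p \<noteq> 0" and inside: "\<forall>m'\<le>m. \<bar>crit_orbit g (m' * p)\<bar> < d"
    and r: "r < p" "1 \<le> m * p + r"
  shows "crit_orbit g (m * p + r) \<noteq> 0"
proof (cases "r \<ge> 1")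
  case True
  then show ?thesis
    using expanding_block_at(1)[of m] inside r crit_orbit_add[of g "m * p" r] by auto
next
  case False
  then have "r = 0" "m \<ge> 1" using r by (auto simp: not_less_eq_eq)
  then show ?thesis using block_points_far_from_crit[of m] inside a by auto
qed

lemma crit_tangent_growth_in_blocks:
  defines "c \<equiv> (\<bar>w0\<bar> + \<eta>) / (Lam - 1)"
  assumes gap: "\<bar>w0\<bar> - \<eta> - c > 0"
    and m: "1 \<le> m" and inside: "\<forall>m'<m. \<bar>crit_orbit g (m' * p)\<bar> < d"
  shows "\<bar>crit_tangent g w (m * p)\<bar> \<ge> c + Lam ^ (m - 1) * (\<bar>w0\<bar> - \<eta> - c)"
  using m inside
proof (induction m)
  case 0
  then show ?case by simp
next
  case (Suc m)
  let ?\<gamma> = "\<bar>w0\<bar> - \<eta> - c"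
  have in0: "\<bar>crit_orbit g (0 * p)\<bar> < d" using Suc.prems by auto
  then have "\<eta> \<ge> 0" using expanding_block_at(3)[of 0] by linarith
  then have c: "c \<ge> 0" "\<bar>w0\<bar> + \<eta> = c * (Lam - 1)" using Lam unfolding c_def by auto
  show ?case
  proof (cases "m = 0")
    case True
    have "crit_tangent g w (Suc 0 * p) = orbit_tangent g w (crit_orbit g (0 * p)) 0 p"
      using crit_tangent_add[of g w 0 p] by simp
    then show ?thesis using True expanding_block_at(3)[OF in0] by auto
  next
    case False
    let ?P = "\<Prod>j<p. Df g ((g ^^ j) (crit_orbit g (m * p)))"
    let ?W = "orbit_tangent g w (crit_orbit g (m * p)) 0 p" and ?D = "crit_tangent g w (m * p)"
    have IH: "\<bar>?D\<bar> \<ge> c + Lam ^ (m - 1) * ?\<gamma>" using Suc False by auto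
    have in_m: "\<bar>crit_orbit g (m * p)\<bar> < d" using Suc.prems by auto
    have "crit_tangent g w (Suc m * p) = ?P * ?D + ?W"
      using crit_tangent_add[of g w "m * p" p] orbit_tangent_affine[of g w _ ?D p]
      by (simp add: add.commute)
    moreover have "\<bar>?P * ?D\<bar> \<ge> Lam * (c + Lam ^ (m - 1) * ?\<gamma>)"
      unfolding abs_mult using expanding_block_at(2)[OF in_m] IH c gap Lam
      by (intro mult_mono) auto
    moreover have "\<bar>?W\<bar> \<le> c * (Lam - 1)" using expanding_block_at(3)[OF in_m] c by linarith
    moreover have "Lam * (c + Lam ^ (m - 1) * ?\<gamma>) - c * (Lam - 1) = c + Lam ^ (Suc m - 1) * ?\<gamma>"
      using False by (cases m) (auto simp: algebra_simps)
    ultimately show ?thesis by linarith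
  qed
qed

lemma block_points_exit_before_period:
  assumes a: "crit_orbit g p \<noteq> 0" and small: "\<And>m. m \<le> Suc M0 \<Longrightarrow> \<bar>crit_orbit g (m * p)\<bar> < d"
    and per: "crit_periodic g"
  obtains M where "Suc M0 < M" "M * p < prime_period g" "\<forall>m<M. \<bar>crit_orbit g (m * p)\<bar> < d"
proof -
  define q where "q = prime_period g"
  have q: "q > 0" "crit_orbit g q = 0"
    using crit_periodic_prime_period[OF per] unfolding q_def crit_orbit_def by auto
  define Inb where "Inb m \<longleftrightarrow> \<bar>crit_orbit g (m * p)\<bar> < d" for m
  have avoid: "crit_orbit g q \<noteq> 0" if "\<forall>m'\<le>q div p. Inb m'"
    using crit_orbit_nonzero_in_blocks[OF a, of "q div p" "q mod p"] that p q(1)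
    unfolding Inb_def by simp
  have exM: "\<exists>m. \<not> Inb m" using avoid q(2) by blast
  define M where "M = (LEAST m. \<not> Inb m)"
  have M: "\<not> Inb M" using LeastI_ex[OF exM] unfolding M_def .
  have below: "Inb m" if "m < M" for m
    using not_less_Least[of m "\<lambda>m. \<not> Inb m"] that unfolding M_def by blast
  have MM0: "Suc M0 < M"
    using M small unfolding Inb_def by (meson not_less)
  have "M * p < q"
  proof (rule ccontr)
    assume "\<not> M * p < q"
    then consider "q = M * p" | "q < M * p" by linarith
    then show False
    proof cases
      case 1
      then show ?thesis using M q(2) below[of 0] MM0 unfolding Inb_def by auto
    next
      case 2
      then have "q div p < M" by (rule less_mult_imp_div_less)
      then show ?thesis using avoid below q(2) by (meson le_less_trans)
    qed
  qed
  then show ?thesis using that MM0 below unfolding q_def Inb_def by blast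
qed

text \<open>If \<open>g\<close> has periodic critical point, the block points must leave the expanding
  neighbourhood before the period (otherwise the orbit never returns to \<open>0\<close>); by then the
  tangent exceeds \<open>B + 1\<close>, and the expansion of \<open>g\<close> keeps it away from \<open>0\<close> up to the period.\<close>
lemma crit_tangent_prime_period_nonzero:
  defines "c \<equiv> (\<bar>w0\<bar> + \<eta>) / (Lam - 1)"
  assumes a: "crit_orbit g p \<noteq> 0" and gap: "\<bar>w0\<bar> - \<eta> - c > 0"
    and small: "\<And>m. m \<le> Suc M0 \<Longrightarrow> \<bar>crit_orbit g (m * p)\<bar> < d"
    and lam: "lam > 1" and B: "B * (lam - 1) = V" "B \<ge> 0"
    and Dfb: "\<And>k. lam \<le> \<bar>Df g (crit_orbit g k)\<bar>" and wb: "\<And>k. \<bar>w (crit_orbit g k)\<bar> \<le> V"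
    and big: "Lam ^ M0 * (\<bar>w0\<bar> - \<eta> - c) > B + 1"
    and per: "crit_periodic g"
  shows "crit_tangent g w (prime_period g) \<noteq> 0"
proof -
  obtain M where M: "Suc M0 < M" "M * p < prime_period g" "\<forall>m<M. \<bar>crit_orbit g (m * p)\<bar> < d"
    using block_points_exit_before_period[OF a small per] by blast
  have "\<eta> \<ge> 0" using expanding_block_at(3)[of 0] small[of 0] by fastforce
  then have c: "c \<ge> 0" using Lam unfolding c_def by auto
  from crit_tangent_growth_in_blocks[OF gap[unfolded c_def] _ M(3)] M(1)
  have "\<bar>crit_tangent g w (M * p)\<bar> \<ge> c + Lam ^ (M - 1) * (\<bar>w0\<bar> - \<eta> - c)"
    unfolding c_def by simp
  moreover have "Lam ^ M0 \<le> Lam ^ (M - 1)" using Lam M(1) by (intro power_increasing) auto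
  ultimately have "\<bar>crit_tangent g w (M * p)\<bar> \<ge> B + 1"
    using big gap c mult_right_mono[of "Lam ^ M0" "Lam ^ (M - 1)" "\<bar>w0\<bar> - \<eta> - c"] by linarith
  from crit_tangent_growth[OF lam B Dfb wb this, of "prime_period g - M * p"] M(2)
  have "lam ^ (prime_period g - M * p) + B \<le> \<bar>crit_tangent g w (prime_period g)\<bar>" by simp
  moreover have "0 < lam ^ (prime_period g - M * p)" using lam by simp
  ultimately show ?thesis using B(2) by linarith
qed
end

section \<open>C^1 families\<close>

locale unimodal_family =
  fixes e :: real and f v :: "real \<Rightarrow> real \<Rightarrow> real"
  assumes family: "C1_family e f v"
begin

abbreviation "E \<equiv> {-e<..<e}"

lemma e_pos: "e > 0"
  using family unfolding C1_family_def by auto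

lemma zero_in_E: "0 \<in> E"
  using e_pos by auto

lemma U1_f: "t \<in> E \<Longrightarrow> U1 (f t)"
  using family unfolding C1_family_def by auto

lemma B1_f: "t \<in> E \<Longrightarrow> B1 (f t)"
  using U1_f U1_B1 by auto

lemma B1_v: "t \<in> E \<Longrightarrow> B1 (v t)"
  using family unfolding C1_family_def by auto

lemma continuous_on_f: "t \<in> E \<Longrightarrow> continuous_on {-1..1} (f t)"
  using B1_f unfolding B1_def by auto

lemma continuous_on_v: "t \<in> E \<Longrightarrow> continuous_on {-1..1} (v t)"
  using B1_v unfolding B1_def by auto

lemma diff_quotient_close:
  assumes "t \<in> E" "\<eta> > 0"
  shows "\<exists>d>0. \<forall>h. h \<noteq> 0 \<and> \<bar>h\<bar> < d \<longrightarrow> t + h \<in> E \<and>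
     (\<forall>x\<in>{-1..1}. \<bar>(f (t + h) x - f t x) / h - v t x\<bar> \<le> \<eta>) \<and>
     (\<forall>x\<in>{-1..0}. \<bar>(DL (f (t + h)) x - DL (f t) x) / h - DL (v t) x\<bar> \<le> \<eta>) \<and>
     (\<forall>x\<in>{0..1}. \<bar>(DR (f (t + h)) x - DR (f t) x) / h - DR (v t) x\<bar> \<le> \<eta>)"
proof -
  have "((\<lambda>h. normB1 (\<lambda>x. (f (t + h) x - f t x) / h - v t x)) \<longlongrightarrow> 0) (at 0)"
    using family assms(1) unfolding C1_family_def by auto
  then have "eventually (\<lambda>h. normB1 (\<lambda>x. (f (t + h) x - f t x) / h - v t x) < \<eta>) (at 0)"
    using assms(2) by (auto dest: order_tendstoD(2))
  then obtain d1 where d1: "d1 > 0" "\<And>h. h \<noteq> 0 \<Longrightarrow> \<bar>h\<bar> < d1 \<Longrightarrow>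
      normB1 (\<lambda>x. (f (t + h) x - f t x) / h - v t x) < \<eta>"
    unfolding eventually_at by (auto simp: dist_real_def)
  show ?thesis
  proof (intro exI[of _ "min d1 (e - \<bar>t\<bar>)"] conjI allI impI)
    show "min d1 (e - \<bar>t\<bar>) > 0" using d1 assms by auto
    fix h assume h: "h \<noteq> 0 \<and> \<bar>h\<bar> < min d1 (e - \<bar>t\<bar>)"
    then show th: "t + h \<in> E" using assms by auto
    have B: "B1 (\<lambda>x. (f (t + h) x - f t x) / h - v t x)"
      by (intro B1_diff_quotient B1_f B1_v th assms(1))
    have N: "normB1 (\<lambda>x. (f (t + h) x - f t x) / h - v t x) < \<eta>" using h d1 by auto
    note diff_quot = DL_diff_quotient[OF B1_f[OF th] B1_f[OF assms(1)] B1_v[OF assms(1)]]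
      DR_diff_quotient[OF B1_f[OF th] B1_f[OF assms(1)] B1_v[OF assms(1)]]
    show "\<forall>x\<in>{-1..1}. \<bar>(f (t + h) x - f t x) / h - v t x\<bar> \<le> \<eta>"
      using abs_le_normB1(1)[OF B] N by fastforce
    show "\<forall>x\<in>{-1..0}. \<bar>(DL (f (t + h)) x - DL (f t) x) / h - DL (v t) x\<bar> \<le> \<eta>"
    proof
      fix x :: real assume x: "x \<in> {-1..0}"
      show "\<bar>(DL (f (t + h)) x - DL (f t) x) / h - DL (v t) x\<bar> \<le> \<eta>"
        using abs_le_normB1(2)[OF B x] N diff_quot(1)[OF x, of h] by simp
    qed
    show "\<forall>x\<in>{0..1}. \<bar>(DR (f (t + h)) x - DR (f t) x) / h - DR (v t) x\<bar> \<le> \<eta>"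
    proof
      fix x :: real assume x: "x \<in> {0..1}"
      show "\<bar>(DR (f (t + h)) x - DR (f t) x) / h - DR (v t) x\<bar> \<le> \<eta>"
        using abs_le_normB1(3)[OF B x] N diff_quot(2)[OF x, of h] by simp
    qed
  qed
qed

lemma f_close_to_f0:
  assumes "\<eta> > 0"
  shows "\<exists>\<delta>>0. \<forall>t. \<bar>t\<bar> < \<delta> \<longrightarrow> t \<in> E \<and>
     (\<forall>x\<in>{-1..1}. \<bar>f t x - f 0 x\<bar> \<le> \<eta>) \<and>
     (\<forall>x\<in>{-1..0}. \<bar>DL (f t) x - DL (f 0) x\<bar> \<le> \<eta>) \<and>
     (\<forall>x\<in>{0..1}. \<bar>DR (f t) x - DR (f 0) x\<bar> \<le> \<eta>)"
proof -
  define C where "C = normB1 (v 0)"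
  note C = abs_le_normB1[OF B1_v[OF zero_in_E], folded C_def]
  have C0: "C \<ge> 0" using C(1)[of 0] by auto
  obtain d1 where d1: "d1 > 0" "\<And>h. h \<noteq> 0 \<Longrightarrow> \<bar>h\<bar> < d1 \<Longrightarrow> h \<in> E \<and>
     (\<forall>x\<in>{-1..1}. \<bar>(f h x - f 0 x) / h - v 0 x\<bar> \<le> 1) \<and>
     (\<forall>x\<in>{-1..0}. \<bar>(DL (f h) x - DL (f 0) x) / h - DL (v 0) x\<bar> \<le> 1) \<and>
     (\<forall>x\<in>{0..1}. \<bar>(DR (f h) x - DR (f 0) x) / h - DR (v 0) x\<bar> \<le> 1)"
    using diff_quotient_close[OF zero_in_E, of 1] by auto
  have small: "\<bar>a\<bar> \<le> \<eta>" if "t \<noteq> 0" "\<bar>a / t - w\<bar> \<le> 1" "\<bar>w\<bar> \<le> C" "\<bar>t\<bar> * (1 + C) \<le> \<eta>"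
    for a t w :: real
  proof -
    have "\<bar>a / t\<bar> \<le> 1 + C" using that(2,3) by linarith
    then have "\<bar>a\<bar> / \<bar>t\<bar> \<le> 1 + C" by (simp add: abs_divide)
    then have "\<bar>a\<bar> \<le> \<bar>t\<bar> * (1 + C)" using that(1) by (simp add: divide_le_eq mult.commute)
    then show ?thesis using that(4) by linarith
  qed
  show ?thesis
  proof (intro exI[of _ "min d1 (min e (\<eta> / (1 + C)))"] conjI allI impI)
    show "min d1 (min e (\<eta> / (1 + C))) > 0" using d1 e_pos assms C0 by auto
    fix t assume t: "\<bar>t\<bar> < min d1 (min e (\<eta> / (1 + C)))"
    then show "t \<in> E" by auto
    have ht: "\<bar>t\<bar> * (1 + C) \<le> \<eta>" using t C0 by (simp add: less_divide_eq mult.commute)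
    note dq = d1(2)[of t] and small' = small[of t _ _, OF _ _ _ ht]
    show "\<forall>x\<in>{-1..1}. \<bar>f t x - f 0 x\<bar> \<le> \<eta>"
    proof (cases "t = 0")
      case False
      show ?thesis by (intro ballI small'[OF False _ C(1)]) (use dq False t in auto)
    qed (use assms in auto)
    show "\<forall>x\<in>{-1..0}. \<bar>DL (f t) x - DL (f 0) x\<bar> \<le> \<eta>"
    proof (cases "t = 0")
      case False
      show ?thesis by (intro ballI small'[OF False _ C(2)]) (use dq False t in auto)
    qed (use assms in auto)
    show "\<forall>x\<in>{0..1}. \<bar>DR (f t) x - DR (f 0) x\<bar> \<le> \<eta>"
    proof (cases "t = 0")
      case False
      show ?thesis by (intro ballI small'[OF False _ C(3)]) (use dq False t in auto)
    qed (use assms in auto)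
  qed
qed

lemma v_close_to_v0:
  assumes "\<eta> > 0"
  shows "\<exists>\<delta>>0. \<forall>t. \<bar>t\<bar> < \<delta> \<longrightarrow> (\<forall>x\<in>{-1..1}. \<bar>v t x - v 0 x\<bar> \<le> \<eta>)"
proof -
  have "((\<lambda>s. normB1 (\<lambda>x. v s x - v 0 x)) \<longlongrightarrow> 0) (at 0 within E)"
    using family zero_in_E unfolding C1_family_def by auto
  then have "eventually (\<lambda>s. normB1 (\<lambda>x. v s x - v 0 x) < \<eta>) (at 0 within E)"
    using assms by (auto dest: order_tendstoD(2))
  then obtain d where d: "d > 0" "\<And>s. s \<in> E \<Longrightarrow> s \<noteq> 0 \<Longrightarrow> \<bar>s\<bar> < d \<Longrightarrow>
      normB1 (\<lambda>x. v s x - v 0 x) < \<eta>"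
    unfolding eventually_at by (auto simp: dist_real_def)
  show ?thesis
  proof (intro exI[of _ "min d e"] conjI allI impI ballI)
    show "min d e > 0" using d e_pos by auto
    fix t x :: real assume t: "\<bar>t\<bar> < min d e" and x: "x \<in> {-1..1}"
    show "\<bar>v t x - v 0 x\<bar> \<le> \<eta>"
    proof (cases "t = 0")
      case False
      with t have "normB1 (\<lambda>x. v t x - v 0 x) < \<eta>" using d(2)[of t] by (auto simp: abs_less_iff)
      then show ?thesis
        using abs_le_normB1(1)[OF B1_diff[OF B1_v B1_v[OF zero_in_E]] x, of t] t
        by (auto simp: abs_less_iff)
    qed (use assms in auto)
  qed
qed

lemma close_to_t0:
  assumes "\<eta> > 0"
  shows "\<exists>\<delta>>0. \<forall>t. \<bar>t\<bar> < \<delta> \<longrightarrow> t \<in> E \<and>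
     (\<forall>x\<in>{-1..1}. \<bar>f t x - f 0 x\<bar> \<le> \<eta> \<and> \<bar>v t x - v 0 x\<bar> \<le> \<eta>) \<and>
     (\<forall>x\<in>{-1..0}. \<bar>DL (f t) x - DL (f 0) x\<bar> \<le> \<eta>) \<and>
     (\<forall>x\<in>{0..1}. \<bar>DR (f t) x - DR (f 0) x\<bar> \<le> \<eta>)"
proof -
  obtain \<delta>1 \<delta>2 where "\<delta>1 > 0" "\<delta>2 > 0"
    "\<forall>t. \<bar>t\<bar> < \<delta>1 \<longrightarrow> t \<in> E \<and> (\<forall>x\<in>{-1..1}. \<bar>f t x - f 0 x\<bar> \<le> \<eta>) \<and>
       (\<forall>x\<in>{-1..0}. \<bar>DL (f t) x - DL (f 0) x\<bar> \<le> \<eta>) \<and> (\<forall>x\<in>{0..1}. \<bar>DR (f t) x - DR (f 0) x\<bar> \<le> \<eta>)"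
    "\<forall>t. \<bar>t\<bar> < \<delta>2 \<longrightarrow> (\<forall>x\<in>{-1..1}. \<bar>v t x - v 0 x\<bar> \<le> \<eta>)"
    using f_close_to_f0[OF assms] v_close_to_v0[OF assms] by blast
  then show ?thesis by (intro exI[of _ "min \<delta>1 \<delta>2"]) auto
qed

lemma uniformly_close_at_0:
  assumes "\<epsilon> > 0"
  shows "\<exists>\<delta>>0. \<forall>t x. \<bar>t\<bar> < \<delta> \<longrightarrow> x \<in> {-1..1} \<longrightarrow> \<bar>f t x - f 0 x\<bar> \<le> \<epsilon>"
    and "\<exists>\<delta>>0. \<forall>t x. \<bar>t\<bar> < \<delta> \<longrightarrow> x \<in> {-1..1} \<longrightarrow> \<bar>v t x - v 0 x\<bar> \<le> \<epsilon>"
    and "\<exists>\<delta>>0. \<forall>t x. \<bar>t\<bar> < \<delta> \<longrightarrow> x \<in> {-1..0} \<longrightarrow> \<bar>DL (f t) x - DL (f 0) x\<bar> \<le> \<epsilon>"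
    and "\<exists>\<delta>>0. \<forall>t x. \<bar>t\<bar> < \<delta> \<longrightarrow> x \<in> {0..1} \<longrightarrow> \<bar>DR (f t) x - DR (f 0) x\<bar> \<le> \<epsilon>"
proof -
  obtain \<delta> where "\<delta> > 0" and \<delta>: "\<And>t. \<bar>t\<bar> < \<delta> \<Longrightarrow> t \<in> E \<and>
     (\<forall>x\<in>{-1..1}. \<bar>f t x - f 0 x\<bar> \<le> \<epsilon> \<and> \<bar>v t x - v 0 x\<bar> \<le> \<epsilon>) \<and>
     (\<forall>x\<in>{-1..0}. \<bar>DL (f t) x - DL (f 0) x\<bar> \<le> \<epsilon>) \<and>
     (\<forall>x\<in>{0..1}. \<bar>DR (f t) x - DR (f 0) x\<bar> \<le> \<epsilon>)"
    using close_to_t0[OF assms] by blast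
  show "\<exists>\<delta>>0. \<forall>t x. \<bar>t\<bar> < \<delta> \<longrightarrow> x \<in> {-1..1} \<longrightarrow> \<bar>f t x - f 0 x\<bar> \<le> \<epsilon>"
    "\<exists>\<delta>>0. \<forall>t x. \<bar>t\<bar> < \<delta> \<longrightarrow> x \<in> {-1..1} \<longrightarrow> \<bar>v t x - v 0 x\<bar> \<le> \<epsilon>"
    "\<exists>\<delta>>0. \<forall>t x. \<bar>t\<bar> < \<delta> \<longrightarrow> x \<in> {-1..0} \<longrightarrow> \<bar>DL (f t) x - DL (f 0) x\<bar> \<le> \<epsilon>"
    "\<exists>\<delta>>0. \<forall>t x. \<bar>t\<bar> < \<delta> \<longrightarrow> x \<in> {0..1} \<longrightarrow> \<bar>DR (f t) x - DR (f 0) x\<bar> \<le> \<epsilon>"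
    using \<delta> \<open>\<delta> > 0\<close> by (intro exI[of _ \<delta>]; simp)+
qed

lemma uniform_bounds_near_0:
  obtains \<delta>0 lam K V where "\<delta>0 > 0" "lam > 1" "K \<ge> 0" "V \<ge> 0"
    "\<And>t. \<bar>t\<bar> < \<delta>0 \<Longrightarrow> t \<in> E"
    "\<And>t x. \<bar>t\<bar> < \<delta>0 \<Longrightarrow> x \<in> {-1..1} \<Longrightarrow> lam \<le> \<bar>Df (f t) x\<bar>"
    "\<And>t x. \<bar>t\<bar> < \<delta>0 \<Longrightarrow> x \<in> {-1..0} \<Longrightarrow> \<bar>DL (f t) x\<bar> \<le> K"
    "\<And>t x. \<bar>t\<bar> < \<delta>0 \<Longrightarrow> x \<in> {0..1} \<Longrightarrow> \<bar>DR (f t) x\<bar> \<le> K"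
    "\<And>t x. \<bar>t\<bar> < \<delta>0 \<Longrightarrow> x \<in> {-1..1} \<Longrightarrow> \<bar>v t x\<bar> \<le> V"
proof -
  obtain lam0 where lam0: "lam0 > 1" "\<And>x. x \<in> {-1..1} \<Longrightarrow> lam0 \<le> \<bar>Df (f 0) x\<bar>"
    using U1_uniform_expansion[OF U1_f[OF zero_in_E]] by blast
  define \<eta> where "\<eta> = (lam0 - 1) / 2"
  have "\<eta> > 0" using lam0 unfolding \<eta>_def by auto
  then obtain \<delta> where "\<delta> > 0" and \<delta>: "\<And>t. \<bar>t\<bar> < \<delta> \<Longrightarrow> t \<in> E \<and>
     (\<forall>x\<in>{-1..1}. \<bar>f t x - f 0 x\<bar> \<le> \<eta> \<and> \<bar>v t x - v 0 x\<bar> \<le> \<eta>) \<and>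
     (\<forall>x\<in>{-1..0}. \<bar>DL (f t) x - DL (f 0) x\<bar> \<le> \<eta>) \<and>
     (\<forall>x\<in>{0..1}. \<bar>DR (f t) x - DR (f 0) x\<bar> \<le> \<eta>)"
    using close_to_t0 by blast
  note K = abs_le_normB1[OF B1_f[OF zero_in_E]] and V = abs_le_normB1(1)[OF B1_v[OF zero_in_E]]
  have Df_close: "\<bar>Df (f t) x - Df (f 0) x\<bar> \<le> \<eta>" if "\<bar>t\<bar> < \<delta>" "x \<in> {-1..1}" for t x
    using \<delta>[OF that(1)] that(2) by (cases "x \<le> 0") (auto simp: Df_def)
  show ?thesis
  proof (rule that[of \<delta> "lam0 - \<eta>" "normB1 (f 0) + \<eta>" "normB1 (v 0) + \<eta>"])
    show "lam0 - \<eta> > 1" "normB1 (f 0) + \<eta> \<ge> 0" "normB1 (v 0) + \<eta> \<ge> 0"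
      using lam0(1) \<open>\<eta> > 0\<close> K(1)[of 0] V[of 0] unfolding \<eta>_def by (auto simp: field_simps)
    fix t x assume t: "\<bar>t\<bar> < \<delta>"
    show "t \<in> E" using \<delta>[OF t] by blast
    show "x \<in> {-1..1} \<Longrightarrow> lam0 - \<eta> \<le> \<bar>Df (f t) x\<bar>"
      using Df_close[OF t, of x] lam0(2)[of x] by linarith
    show "x \<in> {-1..0} \<Longrightarrow> \<bar>DL (f t) x\<bar> \<le> normB1 (f 0) + \<eta>"
      using \<delta>[OF t] K(2)[of x] by fastforce
    show "x \<in> {0..1} \<Longrightarrow> \<bar>DR (f t) x\<bar> \<le> normB1 (f 0) + \<eta>"
      using \<delta>[OF t] K(3)[of x] by fastforce
    show "x \<in> {-1..1} \<Longrightarrow> \<bar>v t x\<bar> \<le> normB1 (v 0) + \<eta>"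
      using \<delta>[OF t] V[of x] by fastforce
  qed (use \<open>\<delta> > 0\<close> in auto)
qed

end

section \<open>Parameter dependence of the critical orbit\<close>

context unimodal_family
begin

lemma diff_quotient_along_tendsto:
  assumes t0: "t0 \<in> E" and y: "(y \<longlongrightarrow> y0) (at t0)"
    and yI: "eventually (\<lambda>t. y t \<in> {-1..1}) (at t0)" and y0: "y0 \<in> {-1..1}"
  shows "((\<lambda>t. (f t (y t) - f t0 (y t)) / (t - t0)) \<longlongrightarrow> v t0 y0) (at t0)"
proof -
  have diff: "((\<lambda>t. (f t (y t) - f t0 (y t)) / (t - t0) - v t0 (y t)) \<longlongrightarrow> 0) (at t0)"
    unfolding tendsto_iff
  proof (intro allI impI)
    fix \<epsilon> :: real assume \<epsilon>: "\<epsilon> > 0"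
    obtain d where d: "d > 0" "\<And>h. h \<noteq> 0 \<and> \<bar>h\<bar> < d \<longrightarrow>
        (\<forall>x\<in>{-1..1}. \<bar>(f (t0 + h) x - f t0 x) / h - v t0 x\<bar> \<le> \<epsilon>/2)"
      using diff_quotient_close[OF t0, of "\<epsilon>/2"] \<epsilon> by auto
    have "eventually (\<lambda>t. t \<noteq> t0 \<and> dist t t0 < d) (at t0)"
      using d(1) unfolding eventually_at by auto
    then show "eventually (\<lambda>t. dist ((f t (y t) - f t0 (y t)) / (t - t0) - v t0 (y t)) 0 < \<epsilon>) (at t0)"
      using yI
    proof eventually_elim
      case (elim t)
      then have "\<bar>(f (t0 + (t - t0)) (y t) - f t0 (y t)) / (t - t0) - v t0 (y t)\<bar> \<le> \<epsilon>/2"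
        using d(2)[of "t - t0"] by (auto simp: dist_real_def)
      then show ?case using \<epsilon> by (simp add: dist_real_def)
    qed
  qed
  have "continuous (at y0 within {-1..1}) (v t0)"
    using continuous_on_v[OF t0] y0 continuous_on_eq_continuous_within by blast
  then have "((\<lambda>t. v t0 (y t)) \<longlongrightarrow> v t0 y0) (at t0)"
    by (rule continuous_within_tendsto_compose[OF _ yI y])
  from tendsto_add[OF diff this] show ?thesis by simp
qed

text \<open>Chain rule for \<open>t \<mapsto> f\<^sub>t(y\<^sub>t)\<close> away from the critical point: Caratheodory's form of the
  derivative of \<open>f\<^sub>t\<^sub>0\<close> on the branch containing \<open>y\<^sub>t\<^sub>0\<close>, plus the parameter derivative \<open>v\<^sub>t\<^sub>0\<close>.\<close>
lemma has_real_derivative_f_comp: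
  assumes t0: "t0 \<in> E" and yd: "(y has_real_derivative D) (at t0)"
    and yI: "\<forall>t\<in>E. y t \<in> {-1..1}" and y0: "y t0 \<noteq> 0"
  shows "((\<lambda>t. f t (y t)) has_real_derivative Df (f t0) (y t0) * D + v t0 (y t0)) (at t0)"
proof -
  let ?y0 = "y t0"
  have yc: "(y \<longlongrightarrow> ?y0) (at t0)" using DERIV_isCont[OF yd] by (simp add: isCont_def)
  have "eventually (\<lambda>t. t \<in> E) (at t0)" by (rule eventually_at_in_open'[OF _ t0]) auto
  then have yev: "eventually (\<lambda>t. y t \<in> {-1..1}) (at t0)" by eventually_elim (use yI in auto)
  have y0I: "?y0 \<in> {-1..1}" using yI t0 by auto
  obtain S where S: "(f t0 has_real_derivative Df (f t0) ?y0) (at ?y0 within S)"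
      "eventually (\<lambda>t. y t \<in> S) (at t0)"
    using U1_has_derivative_Df_within_branch[OF U1_f[OF t0] y0I y0 yc yev] by blast
  obtain \<phi> where phi: "\<And>z. f t0 z - f t0 ?y0 = \<phi> z * (z - ?y0)" "continuous (at ?y0 within S) \<phi>"
      "\<phi> ?y0 = Df (f t0) ?y0"
    using S(1) unfolding DERIV_caratheodory_within by blast
  have "((\<lambda>t. (f t (y t) - f t0 (y t)) / (t - t0) + \<phi> (y t) * ((y t - ?y0) / (t - t0)))
     \<longlongrightarrow> v t0 ?y0 + Df (f t0) ?y0 * D) (at t0)"
  proof (intro tendsto_add tendsto_mult)
    show "((\<lambda>t. (f t (y t) - f t0 (y t)) / (t - t0)) \<longlongrightarrow> v t0 ?y0) (at t0)"
      by (rule diff_quotient_along_tendsto[OF t0 yc yev y0I])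
    show "((\<lambda>t. \<phi> (y t)) \<longlongrightarrow> Df (f t0) ?y0) (at t0)"
      using continuous_within_tendsto_compose[OF phi(2) S(2) yc] phi(3) by simp
    show "((\<lambda>t. (y t - ?y0) / (t - t0)) \<longlongrightarrow> D) (at t0)"
      using yd unfolding has_field_derivative_iff by simp
  qed
  moreover have "(f t (y t) - f t0 (y t)) / (t - t0) + \<phi> (y t) * ((y t - ?y0) / (t - t0)) =
      (f t (y t) - f t0 ?y0) / (t - t0)" for t
    using phi(1)[of "y t"] by (simp add: add_divide_distrib[symmetric] algebra_simps)
  ultimately show ?thesis unfolding has_field_derivative_iff by (simp add: add.commute)
qed

lemma has_real_derivative_crit_orbit:
  assumes t0: "t0 \<in> E" and nz: "\<And>k. 1 \<le> k \<Longrightarrow> k < n \<Longrightarrow> crit_orbit (f t0) k \<noteq> 0"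
  shows "((\<lambda>t. crit_orbit (f t) n) has_real_derivative crit_tangent (f t0) (v t0) n) (at t0)"
  using nz
proof (induction n)
  case 0
  then show ?case by simp
next
  case (Suc n)
  have IH: "((\<lambda>t. crit_orbit (f t) n) has_real_derivative crit_tangent (f t0) (v t0) n) (at t0)"
    using Suc.IH Suc.prems by auto
  show ?case
  proof (cases n)
    case 0
    have "((\<lambda>t. (f t 0 - f t0 0) / (t - t0)) \<longlongrightarrow> v t0 0) (at t0)"
      using diff_quotient_along_tendsto[OF t0, of "\<lambda>_. 0"] by auto
    then show ?thesis using 0 by (simp add: crit_orbit_Suc has_field_derivative_iff)
  next
    case (Suc m)
    then have "crit_orbit (f t0) n \<noteq> 0" using Suc.prems[of n] by auto
    from has_real_derivative_f_comp[OF t0 IH _ this] U1_crit_orbit_in_I[OF U1_f]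
    show ?thesis by (simp add: crit_orbit_Suc)
  qed
qed

lemma eventually_in_E: "(T \<longlongrightarrow> 0) F \<Longrightarrow> eventually (\<lambda>a. T a \<in> E) F"
  using topological_tendstoD[of T 0 F E] zero_in_E by auto

context
  fixes T :: "'a \<Rightarrow> real" and F :: "'a filter"
  assumes T: "(T \<longlongrightarrow> 0) F"
begin

lemma tendsto_f_param:
  assumes Y: "(Y \<longlongrightarrow> y0) F" and YI: "eventually (\<lambda>a. Y a \<in> {-1..1}) F" and y0: "y0 \<in> {-1..1}"
  shows "((\<lambda>a. f (T a) (Y a)) \<longlongrightarrow> f 0 y0) F"
proof (rule tendsto_uniform_compose[OF _ _ T Y YI])
  show "continuous (at y0 within {-1..1}) (f 0)"
    using continuous_on_f[OF zero_in_E] y0 continuous_on_eq_continuous_within by blast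
qed (rule uniformly_close_at_0(1))

lemma tendsto_v_param:
  assumes Y: "(Y \<longlongrightarrow> y0) F" and YI: "eventually (\<lambda>a. Y a \<in> {-1..1}) F" and y0: "y0 \<in> {-1..1}"
  shows "((\<lambda>a. v (T a) (Y a)) \<longlongrightarrow> v 0 y0) F"
proof (rule tendsto_uniform_compose[OF _ _ T Y YI])
  show "continuous (at y0 within {-1..1}) (v 0)"
    using continuous_on_v[OF zero_in_E] y0 continuous_on_eq_continuous_within by blast
qed (rule uniformly_close_at_0(2))

lemma tendsto_Df_param:
  assumes Y: "(Y \<longlongrightarrow> y0) F" and YI: "eventually (\<lambda>a. Y a \<in> {-1..1}) F"
    and y0: "y0 \<in> {-1..1}" "y0 \<noteq> 0"
  shows "((\<lambda>a. Df (f (T a)) (Y a)) \<longlongrightarrow> Df (f 0) y0) F"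
proof (cases "y0 < 0")
  case True
  have "eventually (\<lambda>a. Y a < 0) F" using Y True by (auto dest: order_tendstoD)
  then have YL: "eventually (\<lambda>a. Y a \<in> {-1..0} \<and> Y a \<le> 0) F" using YI by eventually_elim auto
  have "y0 \<in> {-1..0}" using y0 True by auto
  then have cont: "continuous (at y0 within {-1..0}) (DL (f 0))"
    using U1_C1_on_left[OF U1_f[OF zero_in_E]] continuous_on_eq_continuous_within
    unfolding C1_on_def by blast
  have "((\<lambda>a. DL (f (T a)) (Y a)) \<longlongrightarrow> DL (f 0) y0) F"
    using uniformly_close_at_0(3) YL
    by (intro tendsto_uniform_compose[where G = "\<lambda>t. DL (f t)", OF _ cont T Y])
      (auto elim: eventually_mono)
  moreover have "eventually (\<lambda>a. DL (f (T a)) (Y a) = Df (f (T a)) (Y a)) F"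
    using YL by eventually_elim (auto simp: Df_def)
  ultimately show ?thesis using True by (auto simp: Df_def intro: Lim_transform_eventually)
next
  case False
  then have "y0 > 0" using y0 by auto
  then have "eventually (\<lambda>a. Y a > 0) F" using Y by (auto dest: order_tendstoD)
  then have YR: "eventually (\<lambda>a. Y a \<in> {0..1} \<and> \<not> Y a \<le> 0) F" using YI by eventually_elim auto
  have "y0 \<in> {0..1}" using y0 \<open>y0 > 0\<close> by auto
  then have cont: "continuous (at y0 within {0..1}) (DR (f 0))"
    using U1_C1_on_right[OF U1_f[OF zero_in_E]] continuous_on_eq_continuous_within
    unfolding C1_on_def by blast
  have "((\<lambda>a. DR (f (T a)) (Y a)) \<longlongrightarrow> DR (f 0) y0) F"
    using uniformly_close_at_0(4) YR
    by (intro tendsto_uniform_compose[where G = "\<lambda>t. DR (f t)", OF _ cont T Y])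
      (auto elim: eventually_mono)
  moreover have "eventually (\<lambda>a. DR (f (T a)) (Y a) = Df (f (T a)) (Y a)) F"
    using YR by eventually_elim (auto simp: Df_def)
  ultimately show ?thesis using \<open>y0 > 0\<close> by (auto simp: Df_def intro: Lim_transform_eventually)
qed

lemma eventually_funpow_param_in_I:
  assumes "eventually (\<lambda>a. Y a \<in> {-1..1}) F"
  shows "eventually (\<lambda>a. (f (T a) ^^ k) (Y a) \<in> {-1..1}) F"
  using eventually_in_E[OF T] assms by eventually_elim (rule U1_funpow_maps_I[OF U1_f])

lemma tendsto_funpow_param:
  assumes Y: "(Y \<longlongrightarrow> y0) F" and YI: "eventually (\<lambda>a. Y a \<in> {-1..1}) F" and y0: "y0 \<in> {-1..1}"
  shows "((\<lambda>a. (f (T a) ^^ k) (Y a)) \<longlongrightarrow> (f 0 ^^ k) y0) F"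
proof (induction k)
  case 0
  then show ?case using Y by simp
next
  case (Suc k)
  show ?case
    using tendsto_f_param[OF Suc.IH eventually_funpow_param_in_I[OF YI]
        U1_funpow_maps_I[OF U1_f[OF zero_in_E] y0]]
    by simp
qed

lemma tendsto_orbit_tangent_param:
  assumes Y: "(Y \<longlongrightarrow> y0) F" and YI: "eventually (\<lambda>a. Y a \<in> {-1..1}) F" and y0: "y0 \<in> {-1..1}"
    and nz: "\<And>j. 1 \<le> j \<Longrightarrow> j < k \<Longrightarrow> (f 0 ^^ j) y0 \<noteq> 0"
  shows "((\<lambda>a. orbit_tangent (f (T a)) (v (T a)) (Y a) 0 k) \<longlongrightarrow> orbit_tangent (f 0) (v 0) y0 0 k) F"
  using nz
proof (induction k)
  case 0
  then show ?case by simp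
next
  case (Suc k)
  note orbit = tendsto_funpow_param[OF Y YI y0] eventually_funpow_param_in_I[OF YI]
    U1_funpow_maps_I[OF U1_f[OF zero_in_E] y0]
  have V: "((\<lambda>a. v (T a) ((f (T a) ^^ k) (Y a))) \<longlongrightarrow> v 0 ((f 0 ^^ k) y0)) F"
    by (rule tendsto_v_param[OF orbit])
  show ?case
  proof (cases k)
    case 0
    then show ?thesis using V by simp
  next
    case (Suc m)
    then have "(f 0 ^^ k) y0 \<noteq> 0" using Suc.prems[of k] by auto
    then have "((\<lambda>a. Df (f (T a)) ((f (T a) ^^ k) (Y a))) \<longlongrightarrow> Df (f 0) ((f 0 ^^ k) y0)) F"
      by (intro tendsto_Df_param[OF orbit])
    then show ?thesis using Suc.IH Suc.prems V by (auto intro!: tendsto_add tendsto_mult)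
  qed
qed

end

end

section \<open>Non-periodic critical point: periodic parameters accumulate\<close>

context unimodal_family
begin

lemma abs_crit_tangent_large_near_0:
  assumes np: "\<not> crit_periodic (f 0)" and J0: "J (f 0) (v 0) \<noteq> 0"
  obtains N \<delta> where "\<delta> > 0" "\<And>t. \<bar>t\<bar> < \<delta> \<Longrightarrow> C \<le> \<bar>crit_tangent (f t) (v t) N\<bar>"
proof -
  obtain N where N: "C + 1 < \<bar>crit_tangent (f 0) (v 0) N\<bar>"
    using abs_crit_tangent_unbounded[OF U1_f B1_v np J0] zero_in_E by blast
  have nz0: "(f 0 ^^ j) 0 \<noteq> 0" if "1 \<le> j" for j
    using np \<open>1 \<le> j\<close> unfolding crit_periodic_def by (metis less_le_trans zero_less_one)
  have "((\<lambda>t. orbit_tangent (f t) (v t) 0 0 N) \<longlongrightarrow> orbit_tangent (f 0) (v 0) 0 0 N) (at 0)"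
    using tendsto_orbit_tangent_param[of "\<lambda>t. t" "at 0" "\<lambda>_. 0" 0 N] nz0 by auto
  then have "eventually (\<lambda>t. C < \<bar>crit_tangent (f t) (v t) N\<bar>) (at 0)"
    using N unfolding crit_tangent_eq_orbit_tangent by (intro order_tendstoD(1)[OF tendsto_rabs]) auto
  then obtain \<delta> where "\<delta> > 0" and near: "\<And>t. t \<noteq> 0 \<Longrightarrow> \<bar>t\<bar> < \<delta> \<Longrightarrow> C < \<bar>crit_tangent (f t) (v t) N\<bar>"
    unfolding eventually_at by (auto simp: dist_real_def)
  show ?thesis
  proof (rule that[OF \<open>\<delta> > 0\<close>])
    show "C \<le> \<bar>crit_tangent (f t) (v t) N\<bar>" if "\<bar>t\<bar> < \<delta>" for t
      using near[OF _ that] N by (cases "t = 0") auto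
  qed
qed

lemma exists_periodic_param_near_0:
  assumes np: "\<not> crit_periodic (f 0)" and J0: "J (f 0) (v 0) \<noteq> 0" and \<delta>: "\<delta> > 0"
  shows "\<exists>t. t \<in> E \<and> \<bar>t\<bar> < \<delta> \<and> crit_periodic (f t)"
proof (rule ccontr)
  assume no_periodic: "\<not> ?thesis"
  obtain \<delta>0 lam K V where bd: "\<delta>0 > 0" "lam > 1" "V \<ge> 0" "\<And>t. \<bar>t\<bar> < \<delta>0 \<Longrightarrow> t \<in> E"
    "\<And>t x. \<bar>t\<bar> < \<delta>0 \<Longrightarrow> x \<in> {-1..1} \<Longrightarrow> lam \<le> \<bar>Df (f t) x\<bar>"
    "\<And>t x. \<bar>t\<bar> < \<delta>0 \<Longrightarrow> x \<in> {-1..1} \<Longrightarrow> \<bar>v t x\<bar> \<le> V"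
    by (rule uniform_bounds_near_0) blast
  define B where "B = V / (lam - 1)"
  have B: "B * (lam - 1) = V" "B \<ge> 0" using bd(2,3) unfolding B_def by auto
  obtain N \<delta>1 where "\<delta>1 > 0" and \<delta>1: "\<And>t. \<bar>t\<bar> < \<delta>1 \<Longrightarrow> B + 1 \<le> \<bar>crit_tangent (f t) (v t) N\<bar>"
    using abs_crit_tangent_large_near_0[OF np J0] by blast
  define r where "r = min \<delta> (min \<delta>0 \<delta>1) / 2"
  have r: "r > 0" "r < \<delta>" "r < \<delta>0" "r < \<delta>1" using \<delta> bd(1) \<open>\<delta>1 > 0\<close> unfolding r_def by auto
  have tE: "t \<in> E" if "\<bar>t\<bar> \<le> r" for t using bd(4) that r by auto
  have orbit_nz: "crit_orbit (f t) k \<noteq> 0" if "\<bar>t\<bar> \<le> r" "1 \<le> k" for t k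
  proof
    assume "crit_orbit (f t) k = 0"
    then have "crit_periodic (f t)"
      using \<open>1 \<le> k\<close> unfolding crit_periodic_def crit_orbit_def by (metis less_le_trans zero_less_one)
    then show False using no_periodic tE that(1) r(2) by auto
  qed
  obtain m where m: "1 / r < lam ^ m" using real_arch_pow[OF bd(2)] by blast
  have "\<exists>z. -r < z \<and> z < r \<and> \<bar>crit_tangent (f z) (v z) (N + m)\<bar> \<le> 1 / r"
  proof (rule exists_small_derivative[OF r(1)])
    show "crit_orbit (f (-r)) (N + m) \<in> {-1..1}" "crit_orbit (f r) (N + m) \<in> {-1..1}"
      using U1_crit_orbit_in_I[OF U1_f[OF tE]] r(1) by auto
    show "((\<lambda>t. crit_orbit (f t) (N + m)) has_real_derivative crit_tangent (f t) (v t) (N + m)) (at t)"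
      if "-r \<le> t" "t \<le> r" for t
      using that by (intro has_real_derivative_crit_orbit tE orbit_nz) auto
  qed
  then obtain z where z: "-r < z" "z < r" "\<bar>crit_tangent (f z) (v z) (N + m)\<bar> \<le> 1 / r"
    by blast
  have zb: "\<bar>z\<bar> < \<delta>0" "\<bar>z\<bar> < \<delta>1" using z r by auto
  have "lam ^ m + B \<le> \<bar>crit_tangent (f z) (v z) (N + m)\<bar>"
    using bd(5,6)[OF zb(1) U1_crit_orbit_in_I[OF U1_f[OF bd(4)[OF zb(1)]]]]
    by (intro crit_tangent_growth[OF bd(2) B _ _ \<delta>1[OF zb(2)]]) auto
  then show False using z(3) m B(2) by linarith
qed

end

section \<open>Periodic critical point: non-periodic parameters accumulate\<close>

context unimodal_family
begin

lemma eventually_block_orbit_close: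
  fixes T Y :: "'a \<Rightarrow> real"
  assumes T: "(T \<longlongrightarrow> 0) F" and Y: "(Y \<longlongrightarrow> 0) F" and YI: "eventually (\<lambda>a. Y a \<in> {-1..1}) F"
    and nz: "\<And>j. 1 \<le> j \<Longrightarrow> j < p \<Longrightarrow> crit_orbit (f 0) j \<noteq> 0"
    and \<rho>: "\<And>i. i < p - 1 \<Longrightarrow> \<rho> i > 0" and \<eta>: "\<eta> > 0"
  shows "eventually (\<lambda>a.
      (\<forall>i<p - 1. \<bar>(f (T a) ^^ Suc i) (Y a) - crit_orbit (f 0) (Suc i)\<bar> < \<rho> i \<and>
                 \<bar>(f (T a) ^^ Suc i) 0 - crit_orbit (f 0) (Suc i)\<bar> < \<rho> i) \<and>
      (\<forall>j. 1 \<le> j \<and> j < p \<longrightarrow> (f (T a) ^^ j) (Y a) \<noteq> 0) \<and>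
      \<bar>orbit_tangent (f (T a)) (v (T a)) (Y a) 0 p - orbit_tangent (f 0) (v 0) 0 0 p\<bar> < \<eta>) F"
proof -
  have orbit: "((\<lambda>a. (f (T a) ^^ k) (Z a)) \<longlongrightarrow> crit_orbit (f 0) k) F"
    if "(Z \<longlongrightarrow> 0) F" "eventually (\<lambda>a. Z a \<in> {-1..1}) F" for Z k
    using tendsto_funpow_param[OF T that] unfolding crit_orbit_def by simp
  have "eventually (\<lambda>a. \<forall>i\<in>{..<p - 1}.
      \<bar>(f (T a) ^^ Suc i) (Y a) - crit_orbit (f 0) (Suc i)\<bar> < \<rho> i \<and>
      \<bar>(f (T a) ^^ Suc i) 0 - crit_orbit (f 0) (Suc i)\<bar> < \<rho> i) F"
  proof (rule eventually_ball_finite[OF finite_lessThan], intro ballI)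
    fix i assume "i \<in> {..<p - 1}"
    then have "\<rho> i > 0" using \<rho> by auto
    with orbit[OF Y YI, of "Suc i"] orbit[of "\<lambda>_. 0" "Suc i"]
    show "eventually (\<lambda>a. \<bar>(f (T a) ^^ Suc i) (Y a) - crit_orbit (f 0) (Suc i)\<bar> < \<rho> i \<and>
        \<bar>(f (T a) ^^ Suc i) 0 - crit_orbit (f 0) (Suc i)\<bar> < \<rho> i) F"
      by (auto dest!: tendstoD intro: eventually_conj simp: dist_real_def)
  qed
  moreover have "eventually (\<lambda>a. \<forall>j\<in>{1..<p}. (f (T a) ^^ j) (Y a) \<noteq> 0) F"
  proof (rule eventually_ball_finite[OF finite_atLeastLessThan], intro ballI)
    fix j assume "j \<in> {1..<p}"
    then show "eventually (\<lambda>a. (f (T a) ^^ j) (Y a) \<noteq> 0) F"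
      using nz by (intro tendsto_imp_eventually_ne[OF orbit[OF Y YI]]) auto
  qed
  moreover have "((\<lambda>a. orbit_tangent (f (T a)) (v (T a)) (Y a) 0 p) \<longlongrightarrow> orbit_tangent (f 0) (v 0) 0 0 p) F"
    using nz unfolding crit_orbit_def by (intro tendsto_orbit_tangent_param[OF T Y YI]) auto
  then have "eventually (\<lambda>a. \<bar>orbit_tangent (f (T a)) (v (T a)) (Y a) 0 p
      - orbit_tangent (f 0) (v 0) 0 0 p\<bar> < \<eta>) F"
    using \<eta> by (auto dest: tendstoD simp: dist_real_def)
  ultimately show ?thesis by eventually_elim auto
qed

lemma block_orbit_close_near_0:
  assumes nz: "\<And>j. 1 \<le> j \<Longrightarrow> j < p \<Longrightarrow> crit_orbit (f 0) j \<noteq> 0"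
    and \<rho>_pos: "\<And>i. i < p - 1 \<Longrightarrow> \<rho> i > 0" and \<eta>: "\<eta> > 0" and "\<delta>e > 0" "\<rho>0 > 0"
  obtains d where "d > 0" "\<And>t y. t \<noteq> 0 \<Longrightarrow> \<bar>t\<bar> < d \<Longrightarrow> \<bar>y\<bar> < d \<Longrightarrow> y \<in> {-1..1} \<Longrightarrow>
      \<bar>t\<bar> < \<delta>e \<and> \<bar>y\<bar> < \<rho>0 \<and>
      (\<forall>i<p - 1. \<bar>(f t ^^ Suc i) y - crit_orbit (f 0) (Suc i)\<bar> < \<rho> i \<and>
                 \<bar>(f t ^^ Suc i) 0 - crit_orbit (f 0) (Suc i)\<bar> < \<rho> i) \<and>
      (\<forall>j. 1 \<le> j \<and> j < p \<longrightarrow> (f t ^^ j) y \<noteq> 0) \<and>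
      \<bar>orbit_tangent (f t) (v t) y 0 p - orbit_tangent (f 0) (v 0) 0 0 p\<bar> < \<eta>"
proof -
  define F where "F = at ((0::real), (0::real)) within (UNIV \<times> {-1..1})"
  have T: "(fst \<longlongrightarrow> 0) F" and Y: "(snd \<longlongrightarrow> 0) F"
    unfolding F_def by (auto intro!: tendsto_eq_intros)
  have YI: "eventually (\<lambda>a. snd a \<in> {-1..1}) F"
    unfolding F_def eventually_at_filter by (auto intro: always_eventually)
  have "eventually (\<lambda>a.
      (\<forall>i<p - 1. \<bar>(f (fst a) ^^ Suc i) (snd a) - crit_orbit (f 0) (Suc i)\<bar> < \<rho> i \<and>
                 \<bar>(f (fst a) ^^ Suc i) 0 - crit_orbit (f 0) (Suc i)\<bar> < \<rho> i) \<and>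
      (\<forall>j. 1 \<le> j \<and> j < p \<longrightarrow> (f (fst a) ^^ j) (snd a) \<noteq> 0) \<and>
      \<bar>orbit_tangent (f (fst a)) (v (fst a)) (snd a) 0 p - orbit_tangent (f 0) (v 0) 0 0 p\<bar> < \<eta>) F"
    by (rule eventually_block_orbit_close[OF T Y YI nz \<rho>_pos \<eta>])
  moreover have "eventually (\<lambda>a. \<bar>fst a\<bar> < \<delta>e) F" "eventually (\<lambda>a. \<bar>snd a\<bar> < \<rho>0) F"
    using tendsto_0_eventually_abs_less[OF T \<open>\<delta>e > 0\<close>] tendsto_0_eventually_abs_less[OF Y \<open>\<rho>0 > 0\<close>]
    by auto
  ultimately have "eventually (\<lambda>a. \<bar>fst a\<bar> < \<delta>e \<and> \<bar>snd a\<bar> < \<rho>0 \<and>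
      (\<forall>i<p - 1. \<bar>(f (fst a) ^^ Suc i) (snd a) - crit_orbit (f 0) (Suc i)\<bar> < \<rho> i \<and>
                 \<bar>(f (fst a) ^^ Suc i) 0 - crit_orbit (f 0) (Suc i)\<bar> < \<rho> i) \<and>
      (\<forall>j. 1 \<le> j \<and> j < p \<longrightarrow> (f (fst a) ^^ j) (snd a) \<noteq> 0) \<and>
      \<bar>orbit_tangent (f (fst a)) (v (fst a)) (snd a) 0 p - orbit_tangent (f 0) (v 0) 0 0 p\<bar> < \<eta>) F"
    by eventually_elim blast
  then show ?thesis
    unfolding F_def by (rule eventually_at_origin_within_strip) (rule that)
qed

lemma expanding_block_near_0:
  fixes p :: nat and Lam \<eta> :: real
  defines "\<mu> \<equiv> min \<bar>DR (f 0) 0\<bar> \<bar>DL (f 0) 0\<bar>"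
    and "w0 \<equiv> orbit_tangent (f 0) (v 0) 0 0 p"
  assumes p: "p \<ge> 1" and nz: "\<And>j. 1 \<le> j \<Longrightarrow> j < p \<Longrightarrow> crit_orbit (f 0) j \<noteq> 0"
    and Lam: "Lam < \<mu> * (\<Prod>i<p - 1. \<bar>Df (f 0) (crit_orbit (f 0) (Suc i))\<bar>)" and \<eta>: "\<eta> > 0"
  obtains d where "d > 0"
    "\<And>t. t \<noteq> 0 \<Longrightarrow> \<bar>t\<bar> < d \<Longrightarrow> t \<in> E \<and> expanding_block (f t) (v t) p d Lam w0 \<eta>"
proof -
  obtain \<epsilon> where \<epsilon>: "0 < \<epsilon>" "\<epsilon> < 1"
    "Lam < (\<mu> - \<epsilon>) * (\<Prod>i<p - 1. \<bar>Df (f 0) (crit_orbit (f 0) (Suc i))\<bar> - \<epsilon>)"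
    using exists_eps_perturbed_product_gt[OF Lam] by blast
  obtain \<delta>e where "\<delta>e > 0" and \<delta>e: "\<And>t. \<bar>t\<bar> < \<delta>e \<Longrightarrow> t \<in> E \<and>
     (\<forall>x\<in>{-1..1}. \<bar>f t x - f 0 x\<bar> \<le> \<epsilon>/2 \<and> \<bar>v t x - v 0 x\<bar> \<le> \<epsilon>/2) \<and>
     (\<forall>x\<in>{-1..0}. \<bar>DL (f t) x - DL (f 0) x\<bar> \<le> \<epsilon>/2) \<and>
     (\<forall>x\<in>{0..1}. \<bar>DR (f t) x - DR (f 0) x\<bar> \<le> \<epsilon>/2)"
    using close_to_t0[of "\<epsilon>/2"] \<epsilon> by auto
  obtain \<rho>0 where "\<rho>0 > 0"
    and cont0L: "\<And>x. x \<in> {-1..0} \<Longrightarrow> \<bar>x\<bar> < \<rho>0 \<Longrightarrow> \<bar>DL (f 0) x - DL (f 0) 0\<bar> \<le> \<epsilon>/2"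
    and cont0R: "\<And>x. x \<in> {0..1} \<Longrightarrow> \<bar>x\<bar> < \<rho>0 \<Longrightarrow> \<bar>DR (f 0) x - DR (f 0) 0\<bar> \<le> \<epsilon>/2"
    using U1_DL_DR_continuous_at_0[OF U1_f[OF zero_in_E], where \<epsilon> = "\<epsilon>/2"] \<epsilon>(1) by auto
  obtain \<rho> where \<rho>: "\<And>i. i < p - 1 \<Longrightarrow> \<rho> i > 0 \<and> \<rho> i < \<bar>crit_orbit (f 0) (Suc i)\<bar> \<and>
     (\<forall>x\<in>{-1..1}. \<bar>x - crit_orbit (f 0) (Suc i)\<bar> < \<rho> i \<longrightarrow>
        \<bar>Df (f 0) x - Df (f 0) (crit_orbit (f 0) (Suc i))\<bar> \<le> \<epsilon>/2)"
    using U1_Df_continuous_along_crit_orbit[OF U1_f[OF zero_in_E] nz, where \<epsilon> = "\<epsilon>/2"] \<epsilon>(1) by auto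
  obtain d where "d > 0" and d: "\<And>t y. t \<noteq> 0 \<Longrightarrow> \<bar>t\<bar> < d \<Longrightarrow> \<bar>y\<bar> < d \<Longrightarrow> y \<in> {-1..1} \<Longrightarrow>
      \<bar>t\<bar> < \<delta>e \<and> \<bar>y\<bar> < \<rho>0 \<and>
      (\<forall>i<p - 1. \<bar>(f t ^^ Suc i) y - crit_orbit (f 0) (Suc i)\<bar> < \<rho> i \<and>
                 \<bar>(f t ^^ Suc i) 0 - crit_orbit (f 0) (Suc i)\<bar> < \<rho> i) \<and>
      (\<forall>j. 1 \<le> j \<and> j < p \<longrightarrow> (f t ^^ j) y \<noteq> 0) \<and>
      \<bar>orbit_tangent (f t) (v t) y 0 p - w0\<bar> < \<eta>"
    using block_orbit_close_near_0[OF nz _ \<eta> \<open>\<delta>e > 0\<close> \<open>\<rho>0 > 0\<close>, where \<rho> = \<rho>] \<rho>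
    unfolding w0_def by blast
  show ?thesis
  proof (rule that[OF \<open>d > 0\<close>], intro conjI)
    fix t assume t: "t \<noteq> 0" "\<bar>t\<bar> < d"
    have t\<delta>e: "\<bar>t\<bar> < \<delta>e" using d[OF t, of 0] \<open>d > 0\<close> by auto
    then show tE: "t \<in> E" using \<delta>e by blast
    show "expanding_block (f t) (v t) p d Lam w0 \<eta>"
      unfolding expanding_block_def
    proof (intro allI impI conjI)
      fix y assume y: "\<bar>y\<bar> < d" "y \<in> {-1..1}"
      note D = d[OF t y]
      have close: "\<forall>x\<in>{-1..0}. \<bar>DL (f t) x - DL (f 0) x\<bar> \<le> \<epsilon>/2"
        "\<forall>x\<in>{0..1}. \<bar>DR (f t) x - DR (f 0) x\<bar> \<le> \<epsilon>/2"
        using \<delta>e[OF t\<delta>e] by blast+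
      have orbit: "\<rho> i < \<bar>crit_orbit (f 0) (Suc i)\<bar> \<and>
          (\<forall>x\<in>{-1..1}. \<bar>x - crit_orbit (f 0) (Suc i)\<bar> < \<rho> i \<longrightarrow>
            \<bar>Df (f 0) x - Df (f 0) (crit_orbit (f 0) (Suc i))\<bar> \<le> \<epsilon>/2) \<and>
          \<bar>(f t ^^ Suc i) y - crit_orbit (f 0) (Suc i)\<bar> < \<rho> i \<and>
          \<bar>(f t ^^ Suc i) 0 - crit_orbit (f 0) (Suc i)\<bar> < \<rho> i" if "i < p - 1" for i
        using \<rho>[OF that] D that by blast
      have "\<bar>y\<bar> < \<rho>0" using D by blast
      note B = block_expansion[OF U1_f[OF tE] U1_f[OF zero_in_E] \<epsilon>(1,2) p,
          OF bspec[OF close(1)] bspec[OF close(2)] cont0L cont0R this y(2) orbit]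
      let ?Pr = "(\<mu> - \<epsilon>) * (\<Prod>i<p - 1. \<bar>Df (f 0) (crit_orbit (f 0) (Suc i))\<bar> - \<epsilon>)"
      have "?Pr \<le> \<bar>\<Prod>j<p. Df (f t) ((f t ^^ j) y)\<bar>" "?Pr * \<bar>y\<bar> \<le> \<bar>(f t ^^ p) y - (f t ^^ p) 0\<bar>"
        using B unfolding \<mu>_def by simp_all
      moreover have "Lam * \<bar>y\<bar> \<le> ?Pr * \<bar>y\<bar>" using \<epsilon>(3) by (simp add: mult_right_mono)
      ultimately show "Lam \<le> \<bar>\<Prod>j<p. Df (f t) ((f t ^^ j) y)\<bar>"
        "Lam * \<bar>y\<bar> \<le> \<bar>(f t ^^ p) y - (f t ^^ p) 0\<bar>"
        using \<epsilon>(3) by linarith+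
      show "(f t ^^ j) y \<noteq> 0" if "1 \<le> j \<and> j < p" for j
        using D that by blast
      show "\<bar>orbit_tangent (f t) (v t) y 0 p - w0\<bar> \<le> \<eta>"
        using D by linarith
    qed
  qed
qed

lemma crit_orbit_period_small_nonzero_near_0:
  assumes cp: "crit_periodic (f 0)" and J0: "J (f 0) (v 0) \<noteq> 0" and r: "r > 0"
  obtains \<delta> where "\<delta> > 0" "\<And>t. t \<noteq> 0 \<Longrightarrow> \<bar>t\<bar> < \<delta> \<Longrightarrow>
    \<bar>crit_orbit (f t) (prime_period (f 0))\<bar> < r \<and> crit_orbit (f t) (prime_period (f 0)) \<noteq> 0"
proof -
  define p where "p = prime_period (f 0)"
  have p: "crit_orbit (f 0) p = 0" "\<And>k. 1 \<le> k \<Longrightarrow> k < p \<Longrightarrow> crit_orbit (f 0) k \<noteq> 0"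
    using crit_periodic_prime_period[OF cp] unfolding p_def crit_orbit_def by auto
  have der0: "((\<lambda>t. crit_orbit (f t) p) has_real_derivative crit_tangent (f 0) (v 0) p) (at 0)"
    by (rule has_real_derivative_crit_orbit[OF zero_in_E p(2)])
  have "((\<lambda>t. crit_orbit (f t) p) \<longlongrightarrow> 0) (at 0)"
    using DERIV_isCont[OF der0] p(1) by (simp add: isCont_def)
  then have "eventually (\<lambda>t. \<bar>crit_orbit (f t) p\<bar> < r) (at 0)"
    using r by (rule tendsto_0_eventually_abs_less)
  moreover have "eventually (\<lambda>t. crit_orbit (f t) p \<noteq> 0) (at 0)"
    using has_real_derivative_isolated_zero[OF der0 _ p(1)]
      crit_tangent_prime_period_nonzero_of_J[OF U1_f[OF zero_in_E] cp J0]
    unfolding p_def by blast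
  ultimately have "eventually (\<lambda>t. \<bar>crit_orbit (f t) p\<bar> < r \<and> crit_orbit (f t) p \<noteq> 0) (at 0)"
    by (rule eventually_conj)
  then show ?thesis
    using that unfolding eventually_at p_def by (auto simp: dist_real_def)
qed

lemma crit_tangent_nonzero_near_0:
  assumes cp: "crit_periodic (f 0)" and good: "good (f 0)" and J0: "J (f 0) (v 0) \<noteq> 0"
  obtains \<delta> where "\<delta> > 0" "\<And>t. t \<noteq> 0 \<Longrightarrow> \<bar>t\<bar> < \<delta> \<Longrightarrow> crit_periodic (f t) \<Longrightarrow>
    t \<in> E \<and> crit_tangent (f t) (v t) (prime_period (f t)) \<noteq> 0"
proof -
  define p where "p = prime_period (f 0)"
  have p: "p \<ge> 1" "\<And>k. 1 \<le> k \<Longrightarrow> k < p \<Longrightarrow> crit_orbit (f 0) k \<noteq> 0"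
    using crit_periodic_prime_period[OF cp] unfolding p_def crit_orbit_def by auto
  define w0 where "w0 = crit_tangent (f 0) (v 0) p"
  have w0: "w0 \<noteq> 0"
    using crit_tangent_prime_period_nonzero_of_J[OF U1_f[OF zero_in_E] cp J0] unfolding w0_def p_def .
  obtain Lam \<eta> where Lam: "2 < Lam"
      "Lam < min \<bar>DR (f 0) 0\<bar> \<bar>DL (f 0) 0\<bar> * (\<Prod>i<p - 1. \<bar>Df (f 0) (crit_orbit (f 0) (Suc i))\<bar>)"
    and \<eta>: "\<eta> > 0" and gap: "\<bar>w0\<bar> - \<eta> - (\<bar>w0\<bar> + \<eta>) / (Lam - 1) > 0"
    using exists_block_constants[OF w0 good_block_expansion_gt_2[OF cp good, folded p_def]] by blast
  obtain \<delta>0 lam K V where bd: "\<delta>0 > 0" "lam > 1" "K \<ge> 0" "V \<ge> 0" "\<And>t. \<bar>t\<bar> < \<delta>0 \<Longrightarrow> t \<in> E"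
    "\<And>t x. \<bar>t\<bar> < \<delta>0 \<Longrightarrow> x \<in> {-1..1} \<Longrightarrow> lam \<le> \<bar>Df (f t) x\<bar>"
    "\<And>t x. \<bar>t\<bar> < \<delta>0 \<Longrightarrow> x \<in> {-1..0} \<Longrightarrow> \<bar>DL (f t) x\<bar> \<le> K"
    "\<And>t x. \<bar>t\<bar> < \<delta>0 \<Longrightarrow> x \<in> {0..1} \<Longrightarrow> \<bar>DR (f t) x\<bar> \<le> K"
    "\<And>t x. \<bar>t\<bar> < \<delta>0 \<Longrightarrow> x \<in> {-1..1} \<Longrightarrow> \<bar>v t x\<bar> \<le> V"
    by (rule uniform_bounds_near_0) blast
  define B where "B = V / (lam - 1)"
  have B: "B * (lam - 1) = V" "B \<ge> 0" using bd(2,4) unfolding B_def by auto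
  obtain M0 where "(B + 1) / (\<bar>w0\<bar> - \<eta> - (\<bar>w0\<bar> + \<eta>) / (Lam - 1)) < Lam ^ M0"
    using real_arch_pow[of Lam] Lam by auto
  then have big: "Lam ^ M0 * (\<bar>w0\<bar> - \<eta> - (\<bar>w0\<bar> + \<eta>) / (Lam - 1)) > B + 1"
    using gap by (simp add: divide_less_eq)
  obtain d where "d > 0" and blk: "\<And>t. t \<noteq> 0 \<Longrightarrow> \<bar>t\<bar> < d \<Longrightarrow>
      t \<in> E \<and> expanding_block (f t) (v t) p d Lam (orbit_tangent (f 0) (v 0) 0 0 p) \<eta>"
    using expanding_block_near_0[OF p Lam(2) \<eta>] by blast
  note blk = blk[folded crit_tangent_eq_orbit_tangent w0_def]
  define Kp where "Kp = (K ^ p + 1) ^ Suc M0"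
  have Kp: "Kp \<ge> 1" unfolding Kp_def using bd(3) by (intro one_le_power) simp
  then have "d / Kp > 0" using \<open>d > 0\<close> by simp
  then obtain \<delta>a where "\<delta>a > 0"
    and \<delta>a: "\<And>t. t \<noteq> 0 \<Longrightarrow> \<bar>t\<bar> < \<delta>a \<Longrightarrow> \<bar>crit_orbit (f t) p\<bar> < d / Kp \<and> crit_orbit (f t) p \<noteq> 0"
    using crit_orbit_period_small_nonzero_near_0[OF cp J0] unfolding p_def by blast
  show ?thesis
  proof (rule that[of "min (min \<delta>0 d) \<delta>a"])
    fix t assume t: "t \<noteq> 0" "\<bar>t\<bar> < min (min \<delta>0 d) \<delta>a" "crit_periodic (f t)"
    then have t\<delta>0: "\<bar>t\<bar> < \<delta>0" and "\<bar>t\<bar> < d" and "\<bar>t\<bar> < \<delta>a" by auto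
    have tE: "t \<in> E" by (rule bd(5)[OF t\<delta>0])
    have a: "\<bar>crit_orbit (f t) p\<bar> < d / Kp" "crit_orbit (f t) p \<noteq> 0"
      using \<delta>a[OF t(1) \<open>\<bar>t\<bar> < \<delta>a\<close>] by auto
    have small: "\<bar>crit_orbit (f t) (m * p)\<bar> < d" if "m \<le> Suc M0" for m
    proof -
      have "\<bar>crit_orbit (f t) (m * p)\<bar> \<le> (K ^ p + 1) ^ m * \<bar>crit_orbit (f t) p\<bar>"
        by (rule crit_orbit_blocks_bound[OF U1_f[OF tE] bd(7)[OF t\<delta>0] bd(8)[OF t\<delta>0] bd(3)])
      also have "\<dots> \<le> Kp * \<bar>crit_orbit (f t) p\<bar>"
        unfolding Kp_def using that bd(3) by (intro mult_right_mono power_increasing) auto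
      also have "\<dots> < Kp * (d / Kp)" using a(1) Kp by (intro mult_strict_left_mono) auto
      finally show ?thesis using Kp by simp
    qed
    have "crit_tangent (f t) (v t) (prime_period (f t)) \<noteq> 0"
    proof (rule crit_tangent_prime_period_nonzero[OF U1_f[OF tE] p(1) _ _ a(2) gap small bd(2) B _ _
          big t(3)])
      show "2 \<le> Lam" using Lam(1) by simp
      show "expanding_block (f t) (v t) p d Lam w0 \<eta>" using blk[OF t(1) \<open>\<bar>t\<bar> < d\<close>] by blast
      show "lam \<le> \<bar>Df (f t) (crit_orbit (f t) k)\<bar>" "\<bar>v t (crit_orbit (f t) k)\<bar> \<le> V" for k
        using bd(6,9)[OF t\<delta>0 U1_crit_orbit_in_I[OF U1_f[OF tE]]] by auto
    qed
    then show "t \<in> E \<and> crit_tangent (f t) (v t) (prime_period (f t)) \<noteq> 0" using tE by blast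
  qed (use bd(1) \<open>d > 0\<close> \<open>\<delta>a > 0\<close> in auto)
qed

lemma exists_nonperiodic_param_near_0:
  assumes cp: "crit_periodic (f 0)" and good: "good (f 0)" and J0: "J (f 0) (v 0) \<noteq> 0"
    and \<delta>: "\<delta> > 0"
  shows "\<exists>t. t \<in> E \<and> \<bar>t\<bar> < \<delta> \<and> \<not> crit_periodic (f t)"
proof (rule ccontr)
  assume all_periodic: "\<not> ?thesis"
  obtain \<delta>2 where "\<delta>2 > 0" and \<delta>2: "\<And>t. t \<noteq> 0 \<Longrightarrow> \<bar>t\<bar> < \<delta>2 \<Longrightarrow> crit_periodic (f t) \<Longrightarrow>
      t \<in> E \<and> crit_tangent (f t) (v t) (prime_period (f t)) \<noteq> 0"
    using crit_tangent_nonzero_near_0[OF cp good J0] by blast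
  define S where "S = {0<..<min \<delta> (min \<delta>2 e)}"
  have S: "t \<noteq> 0" "\<bar>t\<bar> < \<delta>2" "crit_periodic (f t)" if "t \<in> S" for t
    using that all_periodic unfolding S_def by auto
  define Z where "Z q = {t \<in> S. prime_period (f t) = q}" for q
  have "countable (Z q)" for q
  proof (rule countable_if_no_self_limpt)
    fix t assume t: "t \<in> Z q"
    then have q: "q = prime_period (f t)" and St: "t \<in> S" unfolding Z_def by auto
    note per = crit_periodic_prime_period[OF S(3)[OF St]]
    have tE: "t \<in> E" and nonzero: "crit_tangent (f t) (v t) q \<noteq> 0"
      using \<delta>2[OF S[OF St]] q by auto
    have "crit_orbit (f t) k \<noteq> 0" if "1 \<le> k" "k < q" for k
      using per(3) q that unfolding crit_orbit_def by auto
    then have der: "((\<lambda>s. crit_orbit (f s) q) has_real_derivative crit_tangent (f t) (v t) q) (at t)"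
      by (rule has_real_derivative_crit_orbit[OF tE])
    have "crit_orbit (f t) q = 0" using per(2) q unfolding crit_orbit_def by simp
    from has_real_derivative_isolated_zero[OF der nonzero this]
    have "eventually (\<lambda>s. crit_orbit (f s) q \<noteq> 0) (at t)" .
    moreover have "crit_orbit (f s) q = 0" if "s \<in> Z q" for s
      using that crit_periodic_prime_period(2)[OF S(3)]
      unfolding Z_def crit_orbit_def by auto
    ultimately have "eventually (\<lambda>s. s \<notin> Z q) (at t)" by (auto elim: eventually_mono)
    then show "\<not> t islimpt Z q" unfolding islimpt_iff_eventually by simp
  qed
  then have "countable (\<Union>q. Z q)" by (intro countable_UN) auto
  moreover have "(\<Union>q. Z q) = S" unfolding Z_def by auto
  moreover have "uncountable S"
    unfolding S_def using \<delta> \<open>\<delta>2 > 0\<close> e_pos by (simp add: uncountable_open_interval)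
  ultimately show False by simp
qed

lemma sequence_tendsto_0_from_arbitrarily_small:
  assumes "\<And>\<delta>. \<delta> > 0 \<Longrightarrow> \<exists>t. t \<in> E \<and> \<bar>t\<bar> < \<delta> \<and> P t"
  shows "\<exists>tn :: nat \<Rightarrow> real. (\<forall>n. tn n \<in> E \<and> P (tn n)) \<and> tn \<longlonglongrightarrow> 0"
proof -
  have "\<forall>n. \<exists>t. t \<in> E \<and> \<bar>t\<bar> < 1 / real (Suc n) \<and> P t" using assms by auto
  then obtain tn where tn: "\<And>n. tn n \<in> E \<and> \<bar>tn n\<bar> < 1 / real (Suc n) \<and> P (tn n)" by metis
  have "tn \<longlonglongrightarrow> 0" by (rule LIMSEQ_norm_0) (use tn in auto)
  then show ?thesis using tn by blast
qed

end

theorem corollary4p1: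
  fixes f v :: "real \<Rightarrow> real \<Rightarrow> real" and e :: real
  assumes fam: "C1_family e f v"
    and good0: "good (f 0)"
    and J0: "J (f 0) (v 0) \<noteq> 0"
  shows "(crit_periodic (f 0) \<longrightarrow>
            (\<exists>tn :: nat \<Rightarrow> real. (\<forall>n. tn n \<in> {-e<..<e} \<and> \<not> crit_periodic (f (tn n)))
                               \<and> tn \<longlonglongrightarrow> 0))
       \<and> (\<not> crit_periodic (f 0) \<longrightarrow>
            (\<exists>tn :: nat \<Rightarrow> real. (\<forall>n. tn n \<in> {-e<..<e} \<and> crit_periodic (f (tn n)))
                               \<and> tn \<longlonglongrightarrow> 0))"
proof -
  interpret unimodal_family e f v by (rule unimodal_family.intro[OF fam])
  show ?thesis
  proof (intro conjI impI)
    assume "crit_periodic (f 0)"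
    then show "\<exists>tn. (\<forall>n. tn n \<in> E \<and> \<not> crit_periodic (f (tn n))) \<and> tn \<longlonglongrightarrow> 0"
      by (intro sequence_tendsto_0_from_arbitrarily_small exists_nonperiodic_param_near_0 good0 J0)
  next
    assume "\<not> crit_periodic (f 0)"
    then show "\<exists>tn. (\<forall>n. tn n \<in> E \<and> crit_periodic (f (tn n))) \<and> tn \<longlonglongrightarrow> 0"
      by (intro sequence_tendsto_0_from_arbitrarily_small exists_periodic_param_near_0 J0)
  qed
qed

end
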